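(* Let $E$ be a graph, $K$ a field with involution, $R$ an involutive $K$-algebra whose involution is positive definite, and $t$ a canonical, $K$-linear, $R$-valued trace on $L_K(E)$. Then $t$ is faithful if and only if both (P) $t\big(v-\sum_{e\in I}\mathbf{r}(e)\big)\ge 0$ for every vertex $v$ and every finite subset $I\subseteq\mathbf{s}^{-1}(v)$, and (F) $t(v)>0$ for every vertex $v$ hold.
   Context: A (directed) graph $E=(E^0,E^1,\mathbf{s},\mathbf{r})$ has vertex set $E^0$, edge set $E^1$, source and range maps; no finiteness or countability is assumed. A path is a vertex $v$ (length $0$, $\mathbf{s}(v)=\mathbf{r}(v)=v$) or a sequence $p=e_1\cdots e_n$ of edges with $\mathbf{r}(e_i)=\mathbf{s}(e_{i+1})$, $\mathbf{s}(p)=\mathbf{s}(e_1)$, $\mathbf{r}(p)=\mathbf{r}(e_n)$. A vertex $v$ is regular if $\mathbf{s}^{-1}(v)$ is nonempty and finite. $K$ is a field with an arbitrary involution $a\mapsto a^*$. $L_K(E)$ is the free $K$-algebra generated by $E^0\cup E^1\cup\{e^*:e\in E^1\}$ subject to (V) $vw=\delta_{v,w}v$; (E1) $\mathbf{s}(e)e=e\mathbf{r}(e)=e$; (E2) $\mathbf{r}(e)e^*=e^*\mathbf{s}(e)=e^*$; (CK1) $e^*f=\delta_{e,f}\mathbf{r}(e)$; (CK2) $v=\sum_{e\in\mathbf{s}^{-1}(v)}ee^*$ for regular $v$; with $p^*=e_n^*\cdots e_1^*$, $v^*=v$, it is involutive via $(\sum a_ip_iq_i^* )^*=\sum a_i^*q_ip_i^*$.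 An involutive $K$-algebra is a $K$-algebra with an involution (additive, $(xy)^*=y^*x^*$, $x^{**}=x$) such that $(ax)^*=a^*x^*$. $x\ge0$ means $x$ is a finite sum of elements $zz^*$; $x>0$ means $x\ge0$ and $x\ne0$; $x\ge y$ means $x-y\ge0$. The involution is positive definite if $\sum_i x_ix_i^*=0$ implies all $x_i=0$. A trace is an additive map with $t(xy)=t(yx)$; $K$-linear means $t(ax)=at(x)$; $t$ is faithful if $x>0$ implies $t(x)>0$. A trace $t$ on $L_K(E)$ is canonical if $t(pq^* )=\delta_{p,q}\,t(\mathbf{r}(p))$ for all paths $p,q$ with $\mathbf{r}(p)=\mathbf{r}(q)$. *)

theory Defs
  imports Main
begin

text \<open>A graph is given by a vertex type 'v (= E^0), an edge type 'e (= E^1)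
  and source/range maps s r :: 'e => 'v.  Generators of the free algebra:
  vertices, edges and ghost edges e^*.\<close>

datatype ('v, 'e) gen = V 'v | Ed 'e | Gh 'e

fun gswap :: "('v, 'e) gen \<Rightarrow> ('v, 'e) gen" where
  "gswap (V v) = V v"
| "gswap (Ed e) = Gh e"
| "gswap (Gh e) = Ed e"

definition wstar :: "('v, 'e) gen list \<Rightarrow> ('v, 'e) gen list" where
  "wstar w = rev (map gswap w)"

text \<open>Elements of the (non-unital) free K-algebra on the generators:
  finitely supported K-valued functions on nonempty words.\<close>

definition Fset :: "(('v, 'e) gen list \<Rightarrow> 'k::field) set" where
  "Fset = {f. finite {w. f w \<noteq> 0} \<and> f [] = 0}"

definition fzero :: "('v, 'e) gen list \<Rightarrow> 'k::field" where
  "fzero = (\<lambda>w. 0)"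

definition fadd :: "(('v, 'e) gen list \<Rightarrow> 'k::field) \<Rightarrow> (('v, 'e) gen list \<Rightarrow> 'k) \<Rightarrow> ('v, 'e) gen list \<Rightarrow> 'k" where
  "fadd f g = (\<lambda>w. f w + g w)"

definition fsub :: "(('v, 'e) gen list \<Rightarrow> 'k::field) \<Rightarrow> (('v, 'e) gen list \<Rightarrow> 'k) \<Rightarrow> ('v, 'e) gen list \<Rightarrow> 'k" where
  "fsub f g = (\<lambda>w. f w - g w)"

definition fscal :: "'k::field \<Rightarrow> (('v, 'e) gen list \<Rightarrow> 'k) \<Rightarrow> ('v, 'e) gen list \<Rightarrow> 'k" where
  "fscal a f = (\<lambda>w. a * f w)"

definition fmul :: "(('v, 'e) gen list \<Rightarrow> 'k::field) \<Rightarrow> (('v, 'e) gen list \<Rightarrow> 'k) \<Rightarrow> ('v, 'e) gen list \<Rightarrow> 'k" where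
  "fmul f g = (\<lambda>w. \<Sum>i\<in>{0..length w}. f (take i w) * g (drop i w))"

definition fstar :: "('k::field \<Rightarrow> 'k) \<Rightarrow> (('v, 'e) gen list \<Rightarrow> 'k) \<Rightarrow> ('v, 'e) gen list \<Rightarrow> 'k" where
  "fstar ks f = (\<lambda>w. ks (f (wstar w)))"

definition mon :: "('v, 'e) gen list \<Rightarrow> ('v, 'e) gen list \<Rightarrow> 'k::field" where
  "mon w = (\<lambda>u. if u = w then 1 else 0)"

definition fsum :: "('a \<Rightarrow> ('v, 'e) gen list \<Rightarrow> 'k::field) \<Rightarrow> 'a set \<Rightarrow> ('v, 'e) gen list \<Rightarrow> 'k" where
  "fsum g A = (\<lambda>w. \<Sum>a\<in>A. g a w)"

definition fsum_list :: "(('v, 'e) gen list \<Rightarrow> 'k::field) list \<Rightarrow> ('v, 'e) gen list \<Rightarrow> 'k" where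
  "fsum_list xs = (\<lambda>w. \<Sum>f\<leftarrow>xs. f w)"

definition regular :: "('e \<Rightarrow> 'v) \<Rightarrow> 'v \<Rightarrow> bool" where
  "regular s v \<longleftrightarrow> {e. s e = v} \<noteq> {} \<and> finite {e. s e = v}"

definition lpa_rels :: "('e \<Rightarrow> 'v) \<Rightarrow> ('e \<Rightarrow> 'v) \<Rightarrow> (('v, 'e) gen list \<Rightarrow> 'k::field) set" where
  "lpa_rels s r =
     {fsub (mon [V v, V w]) (if v = w then mon [V v] else fzero) | v w. True}
   \<union> {fsub (mon [V (s e), Ed e]) (mon [Ed e]) | e. True}
   \<union> {fsub (mon [Ed e, V (r e)]) (mon [Ed e]) | e. True}
   \<union> {fsub (mon [V (r e), Gh e]) (mon [Gh e]) | e. True}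
   \<union> {fsub (mon [Gh e, V (s e)]) (mon [Gh e]) | e. True}
   \<union> {fsub (mon [Gh e, Ed f]) (if e = f then mon [V (r e)] else fzero) | e f. True}
   \<union> {fsub (mon [V v]) (fsum (\<lambda>e. mon [Ed e, Gh e]) {e. s e = v}) | v. regular s v}"

text \<open>The two-sided ideal of the free algebra generated by the relations;
  L_K(E) is the quotient Fset / lpa_ideal s r.\<close>
inductive_set lpa_ideal :: "('e \<Rightarrow> 'v) \<Rightarrow> ('e \<Rightarrow> 'v) \<Rightarrow> (('v, 'e) gen list \<Rightarrow> 'k::field) set"
  for s r where
  rel: "x \<in> lpa_rels s r \<Longrightarrow> x \<in> lpa_ideal s r"
| zero: "fzero \<in> lpa_ideal s r"
| add: "x \<in> lpa_ideal s r \<Longrightarrow> y \<in> lpa_ideal s r \<Longrightarrow> fadd x y \<in> lpa_ideal s r"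
| scal: "x \<in> lpa_ideal s r \<Longrightarrow> fscal a x \<in> lpa_ideal s r"
| mult_left: "x \<in> lpa_ideal s r \<Longrightarrow> f \<in> Fset \<Longrightarrow> fmul f x \<in> lpa_ideal s r"
| mult_right: "x \<in> lpa_ideal s r \<Longrightarrow> f \<in> Fset \<Longrightarrow> fmul x f \<in> lpa_ideal s r"

datatype ('v, 'e) path = PV 'v | PE "'e list"

fun valid_path :: "('e \<Rightarrow> 'v) \<Rightarrow> ('e \<Rightarrow> 'v) \<Rightarrow> ('v, 'e) path \<Rightarrow> bool" where
  "valid_path s r (PV v) = True"
| "valid_path s r (PE es) \<longleftrightarrow> es \<noteq> [] \<and> (\<forall>i. Suc i < length es \<longrightarrow> r (es ! i) = s (es ! Suc i))"

fun path_range :: "('e \<Rightarrow> 'v) \<Rightarrow> ('v, 'e) path \<Rightarrow> 'v" where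
  "path_range r (PV v) = v"
| "path_range r (PE es) = r (last es)"

fun path_word :: "('v, 'e) path \<Rightarrow> ('v, 'e) gen list" where
  "path_word (PV v) = [V v]"
| "path_word (PE es) = map Ed es"

definition field_involution :: "('k::field \<Rightarrow> 'k) \<Rightarrow> bool" where
  "field_involution ks \<longleftrightarrow>
     (\<forall>a b. ks (a + b) = ks a + ks b) \<and> (\<forall>a b. ks (a * b) = ks b * ks a) \<and> (\<forall>a. ks (ks a) = a)"

text \<open>R (a ring, not necessarily unital) is an involutive K-algebra via the
  scalar action sc and the involution rs.\<close>
definition involutive_algebra :: "('k::field \<Rightarrow> 'k) \<Rightarrow> ('k \<Rightarrow> 'r::ring \<Rightarrow> 'r) \<Rightarrow> ('r \<Rightarrow> 'r) \<Rightarrow> bool" where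
  "involutive_algebra ks sc rs \<longleftrightarrow>
     (\<forall>a x y. sc a (x + y) = sc a x + sc a y) \<and>
     (\<forall>a b x. sc (a + b) x = sc a x + sc b x) \<and>
     (\<forall>a b x. sc (a * b) x = sc a (sc b x)) \<and>
     (\<forall>x. sc 1 x = x) \<and>
     (\<forall>a x y. sc a (x * y) = sc a x * y) \<and>
     (\<forall>a x y. sc a (x * y) = x * sc a y) \<and>
     (\<forall>x y. rs (x + y) = rs x + rs y) \<and>
     (\<forall>x y. rs (x * y) = rs y * rs x) \<and>
     (\<forall>x. rs (rs x) = x) \<and>
     (\<forall>a x. rs (sc a x) = sc (ks a) (rs x))"

definition positive_definite :: "('r::ring \<Rightarrow> 'r) \<Rightarrow> bool" where
  "positive_definite rs \<longleftrightarrow>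
     (\<forall>xs. (\<Sum>x\<leftarrow>xs. x * rs x) = 0 \<longrightarrow> (\<forall>x\<in>set xs. x = 0))"

definition nonneg :: "('r::ring \<Rightarrow> 'r) \<Rightarrow> 'r \<Rightarrow> bool" where
  "nonneg rs x \<longleftrightarrow> (\<exists>zs. x = (\<Sum>z\<leftarrow>zs. z * rs z))"

definition positive :: "('r::ring \<Rightarrow> 'r) \<Rightarrow> 'r \<Rightarrow> bool" where
  "positive rs x \<longleftrightarrow> nonneg rs x \<and> x \<noteq> 0"

text \<open>A map t on representatives defines an additive trace L_K(E) \<rightarrow> R.\<close>
definition lpa_trace :: "('e \<Rightarrow> 'v) \<Rightarrow> ('e \<Rightarrow> 'v) \<Rightarrow> ((('v, 'e) gen list \<Rightarrow> 'k::field) \<Rightarrow> 'r::ring) \<Rightarrow> bool" where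
  "lpa_trace s r t \<longleftrightarrow>
     (\<forall>x\<in>Fset. \<forall>y\<in>Fset. fsub x y \<in> lpa_ideal s r \<longrightarrow> t x = t y) \<and>
     (\<forall>x\<in>Fset. \<forall>y\<in>Fset. t (fadd x y) = t x + t y) \<and>
     (\<forall>x\<in>Fset. \<forall>y\<in>Fset. t (fmul x y) = t (fmul y x))"

definition K_linear_trace :: "('k::field \<Rightarrow> 'r::ring \<Rightarrow> 'r) \<Rightarrow> ((('v, 'e) gen list \<Rightarrow> 'k) \<Rightarrow> 'r) \<Rightarrow> bool" where
  "K_linear_trace sc t \<longleftrightarrow> (\<forall>a. \<forall>x\<in>Fset. t (fscal a x) = sc a (t x))"

definition canonical_trace :: "('e \<Rightarrow> 'v) \<Rightarrow> ('e \<Rightarrow> 'v) \<Rightarrow> ('k::field \<Rightarrow> 'k) \<Rightarrow> ((('v, 'e) gen list \<Rightarrow> 'k) \<Rightarrow> 'r::ring) \<Rightarrow> bool" where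
  "canonical_trace s r ks t \<longleftrightarrow>
     (\<forall>p q. valid_path s r p \<longrightarrow> valid_path s r q \<longrightarrow> path_range r p = path_range r q \<longrightarrow>
        t (fmul (mon (path_word p)) (fstar ks (mon (path_word q))))
        = (if p = q then t (mon [V (path_range r p)]) else 0))"

definition lpa_positive :: "('e \<Rightarrow> 'v) \<Rightarrow> ('e \<Rightarrow> 'v) \<Rightarrow> ('k::field \<Rightarrow> 'k) \<Rightarrow> (('v, 'e) gen list \<Rightarrow> 'k) \<Rightarrow> bool" where
  "lpa_positive s r ks x \<longleftrightarrow>
     (\<exists>zs. set zs \<subseteq> Fset \<and> fsub x (fsum_list (map (\<lambda>z. fmul z (fstar ks z)) zs)) \<in> lpa_ideal s r)
     \<and> x \<notin> lpa_ideal s r"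

definition faithful :: "('e \<Rightarrow> 'v) \<Rightarrow> ('e \<Rightarrow> 'v) \<Rightarrow> ('k::field \<Rightarrow> 'k) \<Rightarrow> ('r::ring \<Rightarrow> 'r) \<Rightarrow> ((('v, 'e) gen list \<Rightarrow> 'k) \<Rightarrow> 'r) \<Rightarrow> bool" where
  "faithful s r ks rs t \<longleftrightarrow> (\<forall>x\<in>Fset. lpa_positive s r ks x \<longrightarrow> positive rs (t x))"

end

theory Submission
  imports Defs
begin

text \<open>
  Necessity: a vertex v is a nonzero projection (nonzero because it acts as the identity on the
  boundary paths starting at v), and for a finite set I of edges leaving v the element
  v - \<Sum>(e \<in> I) e e^* is a projection whose trace is t(v) - \<Sum>(e \<in> I) t(r e) by canonicity.

  Sufficiency: modulo the relations every z is a K-combination of monomials p q^* with paths p, q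
  of equal range. Fix a finite edge set F and a length bound n covering the q's that occur, and put
  X(p,q) = p q^* - \<Sum>(f) p f (q f)^*, summing over the edges f \<in> F leaving r(p) (no sum when
  |q| = n). Each p q^* is the sum of the X(p\<gamma>, q\<gamma>) over the admissible extensions \<gamma>,
  so z is a combination of X's. By canonicity the X's are orthogonal for (x, y) \<mapsto> t(x y^*), and
  t(X X^*) = t(r p) - \<Sum>(f) t(r f), which is \<ge> 0 by (P) and, by (F), vanishes only when the f's
  exhaust the edges at a regular vertex, where X = 0 by (CK2). Positive definiteness of R then gives
  t(z z^*) \<ge> 0, with equality only if z lies in the ideal.
\<close>

section \<open>The free algebra\<close>

abbreviation finsupp :: "(('v, 'e) gen list \<Rightarrow> 'k::field) \<Rightarrow> bool" where
  "finsupp h \<equiv> finite {w. h w \<noteq> 0}"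

lemma fmul_Nil: "fmul f g [] = f [] * g []"
  by (simp add: fmul_def)
lemma fmul_sub_left: "fmul (fsub f g) h = fsub (fmul f h) (fmul g h)"
  by (auto simp: fmul_def fsub_def algebra_simps sum_subtractf)
lemma fmul_sub_right: "fmul h (fsub f g) = fsub (fmul h f) (fmul h g)"
  by (auto simp: fmul_def fsub_def algebra_simps sum_subtractf)
lemma fmul_scal_left: "fmul (fscal a f) h = fscal a (fmul f h)"
  by (auto simp: fmul_def fscal_def algebra_simps sum_distrib_left)
lemma fmul_scal_right: "fmul h (fscal a f) = fscal a (fmul h f)"
  by (auto simp: fmul_def fscal_def algebra_simps sum_distrib_left)
lemma fmul_sum_left: "fmul (fsum g A) h = fsum (\<lambda>a. fmul (g a) h) A"
  by (auto simp: fmul_def fsum_def sum_distrib_right intro!: sum.swap)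
lemma fmul_sum_right: "fmul h (fsum g A) = fsum (\<lambda>a. fmul h (g a)) A"
  by (auto simp: fmul_def fsum_def sum_distrib_left intro!: sum.swap)

lemma fmul_mon_left: "fmul (mon u) h w = (if take (length u) w = u then h (drop (length u) w) else 0)"
proof -
  have "fmul (mon u) h w = (\<Sum>i\<in>{0..length w}. if i = length u \<and> take (length u) w = u then h (drop (length u) w) else 0)"
    unfolding fmul_def mon_def
    by (rule sum.cong) (auto simp: min_def split: if_splits)
  also have "\<dots> = (if take (length u) w = u then h (drop (length u) w) else 0)"
  proof (cases "take (length u) w = u")
    case True
    then have "length u \<le> length w" by (metis length_take min.absorb_iff2 min.cobounded2)
    with True show ?thesis by (simp add: sum.delta)
  qed simp
  finally show ?thesis .
qed

lemma fmul_mon_left_app: "fmul (mon u) h (u @ w) = h w"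
  by (simp add: fmul_mon_left)

lemma fmul_mon_left_supp: "fmul (mon u) h w \<noteq> 0 \<Longrightarrow> \<exists>w'. w = u @ w' \<and> h w' \<noteq> 0"
  by (auto simp: fmul_mon_left split: if_splits intro!: exI[of _ "drop (length u) w"]) (metis append_take_drop_id)

lemma fmul_mon_right_app: "fmul h (mon u) (w @ u) = h w"
proof -
  have "fmul h (mon u) (w @ u) = (\<Sum>i\<in>{0..length (w @ u)}. if i = length w then h w else 0)"
    unfolding fmul_def mon_def
  proof (rule sum.cong[OF refl])
    fix i assume i: "i \<in> {0..length (w @ u)}"
    show "h (take i (w @ u)) * (if drop i (w @ u) = u then 1 else 0) = (if i = length w then h w else 0)"
    proof (cases "drop i (w @ u) = u")
      case True
      then have "length (drop i (w @ u)) = length u" by simp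
      then have "i = length w" using i by auto
      then show ?thesis by simp
    qed auto
  qed
  then show ?thesis by simp
qed

lemma fmul_mon_right_supp: "fmul h (mon u) w \<noteq> 0 \<Longrightarrow> \<exists>w'. w = w' @ u \<and> h w' \<noteq> 0"
proof -
  assume "fmul h (mon u) w \<noteq> 0"
  then obtain i where "h (take i w) * mon u (drop i w) \<noteq> 0" unfolding fmul_def
    by (auto elim: sum.not_neutral_contains_not_neutral)
  then have "drop i w = u" "h (take i w) \<noteq> 0" by (auto simp: mon_def split: if_splits)
  then show ?thesis by (metis append_take_drop_id)
qed

lemma fmul_mon_mon: "fmul (mon u) (mon v) = mon (u @ v)"
proof
  fix w show "fmul (mon u) (mon v) w = mon (u @ v) w"
    unfolding fmul_mon_left by (auto simp: mon_def) (metis append_take_drop_id)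
qed

lemma mon_append3: "mon (a @ u @ b) = fmul (mon a) (fmul (mon u) (mon b))"
  by (simp add: fmul_mon_mon)

lemma fmul_mon_Nil_left[simp]: "fmul (mon []) x = x"
  by (rule ext) (simp add: fmul_mon_left)
lemma fmul_mon_Nil_right[simp]: "fmul x (mon []) = x"
proof
  fix w
  have "fmul x (mon []) w = (\<Sum>i\<in>{0..length w}. if i = length w then x (take i w) else 0)"
    unfolding fmul_def mon_def by (rule sum.cong) auto
  then show "fmul x (mon []) w = x w" by simp
qed

lemma fsub_self: "fsub x x = fzero" by (rule ext) (simp add: fsub_def fzero_def)
lemma fadd_fzero[simp]: "fadd a fzero = a"
  by (rule ext) (simp add: fadd_def fzero_def)
lemma fsub_as_add: "fsub x y = fadd x (fscal (-1) y)"
  by (rule ext) (simp add: fsub_def fadd_def fscal_def)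
lemma fsum_insert: "finite F \<Longrightarrow> x \<notin> F \<Longrightarrow> fsum g (insert x F) = fadd (g x) (fsum g F)"
  by (auto simp: fsum_def fadd_def)
lemma fsum_empty[simp]: "fsum g {} = fzero"
  by (auto simp: fsum_def fzero_def)
lemma fsum_list_Nil[simp]: "fsum_list [] = fzero"
  by (rule ext) (simp add: fsum_list_def fzero_def)
lemma fsum_list_Cons[simp]: "fsum_list (a # xs) = fadd a (fsum_list xs)"
  by (rule ext) (simp add: fsum_list_def fadd_def)

lemma fscal_fsum: "fscal a (fsum f A) = fsum (\<lambda>x. fscal a (f x)) A"
  by (rule ext) (simp add: fscal_def fsum_def sum_distrib_left)

lemma fsum_Sigma:
  "finite A \<Longrightarrow> (\<And>a. a \<in> A \<Longrightarrow> finite (B a)) \<Longrightarrow>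
     fsum (\<lambda>a. fsum (f a) (B a)) A = fsum (\<lambda>(a, b). f a b) (Sigma A B)"
  by (rule ext) (simp add: fsum_def sum.Sigma case_prod_unfold)

lemma fsum_if_filter:
  "finite A \<Longrightarrow> fsum (\<lambda>x. if P x then f x else fzero) A = fsum f {x \<in> A. P x}"
  unfolding fsum_def fzero_def by (rule ext) (simp add: if_distribR sum.inter_filter)

lemma fsum_fscal_image:
  assumes "finite A"
  shows "fsum (\<lambda>x. fscal (c x) (f (g x))) A
    = fsum (\<lambda>y. fscal (\<Sum>x\<in>{x \<in> A. g x = y}. c x) (f y)) (g ` A)"
proof
  fix w
  have "(\<Sum>x\<in>A. c x * f (g x) w) = (\<Sum>y\<in>g ` A. \<Sum>x\<in>{x \<in> A. g x = y}. c x * f (g x) w)"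
    using assms by (rule sum.image_gen)
  also have "\<dots> = (\<Sum>y\<in>g ` A. (\<Sum>x\<in>{x \<in> A. g x = y}. c x) * f y w)"
    by (auto simp: sum_distrib_right intro!: sum.cong)
  finally show "fsum (\<lambda>x. fscal (c x) (f (g x))) A w
      = fsum (\<lambda>y. fscal (\<Sum>x\<in>{x \<in> A. g x = y}. c x) (f y)) (g ` A) w"
    by (simp add: fsum_def fscal_def)
qed

lemma fsum_cong: "(\<And>a. a \<in> A \<Longrightarrow> f a = g a) \<Longrightarrow> fsum f A = fsum g A"
  unfolding fsum_def by (rule ext) (simp cong: sum.cong)

lemma fsum_reindex: "inj_on h A \<Longrightarrow> fsum g (h ` A) = fsum (\<lambda>x. g (h x)) A"
  by (rule ext) (simp add: fsum_def sum.reindex)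

lemma fsum_diagonal:
  "finite I \<Longrightarrow> fsum (\<lambda>e. fsum (\<lambda>f. if f = e then g f else fzero) I) I = fsum g I"
  unfolding fsum_def fzero_def by (rule ext) (simp add: if_distribR sum.delta)

lemma fsum_mon_expansion: "finsupp z \<Longrightarrow> z = fsum (\<lambda>w. fscal (z w) (mon w)) {w. z w \<noteq> 0}"
proof
  fix x assume "finsupp z"
  have "\<And>a. z a * (if x = a then 1 else 0) = (if a = x then z x else 0)" by auto
  then show "z x = fsum (\<lambda>w. fscal (z w) (mon w)) {w. z w \<noteq> 0} x"
    using \<open>finsupp z\<close> by (simp add: fsum_def fscal_def mon_def sum.delta)
qed

lemma Fset_mon: "w \<noteq> [] \<Longrightarrow> mon w \<in> Fset"
  by (auto simp: Fset_def mon_def)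
lemma Fset_zero[simp]: "fzero \<in> Fset"
  by (auto simp: Fset_def fzero_def)
lemma Fset_add: "f \<in> Fset \<Longrightarrow> g \<in> Fset \<Longrightarrow> fadd f g \<in> Fset"
  unfolding Fset_def by (auto intro: finite_subset[of _ "{w. f w \<noteq> 0} \<union> {w. g w \<noteq> 0}"] simp: fadd_def)
lemma Fset_sub: "f \<in> Fset \<Longrightarrow> g \<in> Fset \<Longrightarrow> fsub f g \<in> Fset"
  unfolding Fset_def by (auto intro: finite_subset[of _ "{w. f w \<noteq> 0} \<union> {w. g w \<noteq> 0}"] simp: fsub_def)
lemma Fset_scal: "f \<in> Fset \<Longrightarrow> fscal a f \<in> Fset"
  unfolding Fset_def by (auto intro: finite_subset[of _ "{w. f w \<noteq> 0}"] simp: fscal_def)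

lemma Fset_fsum: "finite A \<Longrightarrow> (\<And>a. a \<in> A \<Longrightarrow> g a \<in> Fset) \<Longrightarrow> fsum g A \<in> Fset"
proof (induction A rule: finite_induct)
  case empty then show ?case by (simp add: fsum_def fzero_def[symmetric])
next
  case (insert x F)
  have "fsum g (insert x F) = fadd (g x) (fsum g F)"
    using insert by (auto simp: fsum_def fadd_def)
  then show ?case using insert by (auto intro: Fset_add)
qed

lemma Fset_mul: assumes "f \<in> Fset" "g \<in> Fset" shows "fmul f g \<in> Fset"
proof -
  let ?A = "{w. f w \<noteq> 0}" and ?B = "{w. g w \<noteq> 0}"
  have "{w. fmul f g w \<noteq> 0} \<subseteq> (\<lambda>(u,v). u @ v) ` (?A \<times> ?B)"
  proof
    fix w assume "w \<in> {w. fmul f g w \<noteq> 0}"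
    then obtain i where "f (take i w) * g (drop i w) \<noteq> 0"
      unfolding fmul_def by (auto elim: sum.not_neutral_contains_not_neutral)
    then show "w \<in> (\<lambda>(u,v). u @ v) ` (?A \<times> ?B)"
      by (auto intro!: image_eqI[of _ _ "(take i w, drop i w)"])
  qed
  moreover have "finite ((\<lambda>(u,v). u @ v) ` (?A \<times> ?B))" using assms by (auto simp: Fset_def)
  ultimately show ?thesis using assms by (auto simp: Fset_def fmul_Nil intro: finite_subset)
qed

lemma Fset_fsum_list: "set xs \<subseteq> Fset \<Longrightarrow> fsum_list xs \<in> Fset"
  by (induction xs) (auto intro: Fset_add)

lemma finsupp_fadd: "finsupp h1 \<Longrightarrow> finsupp h2 \<Longrightarrow> finsupp (fadd h1 h2)"
  by (rule finite_subset[of _ "{w. h1 w \<noteq> 0} \<union> {w. h2 w \<noteq> 0}"]) (auto simp: fadd_def)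
lemma finsupp_fscal: "finsupp h \<Longrightarrow> finsupp (fscal a h)"
  by (rule finite_subset[of _ "{w. h w \<noteq> 0}"]) (auto simp: fscal_def)
lemma finsupp_fsum: "finite A \<Longrightarrow> (\<And>a. a \<in> A \<Longrightarrow> finsupp (g a)) \<Longrightarrow> finsupp (fsum g A)"
proof (induction A rule: finite_induct)
  case empty then show ?case by (simp add: fzero_def)
next
  case (insert a A) then show ?case by (simp add: fsum_insert finsupp_fadd)
qed
lemma finsupp_mon: "finsupp (mon u)" by (rule finite_subset[of _ "{u}"]) (auto simp: mon_def)
lemma finsupp_fzero: "finsupp fzero" by (simp add: fzero_def)

lemma gswap_gswap[simp]: "gswap (gswap g) = g" by (cases g) auto
lemma wstar_wstar[simp]: "wstar (wstar w) = w"
  by (simp add: wstar_def rev_map comp_def)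
lemma wstar_append: "wstar (u @ v) = wstar v @ wstar u"
  by (simp add: wstar_def)
lemma wstar_Nil[simp]: "wstar [] = []" by (simp add: wstar_def)
lemma wstar_Cons[simp]: "wstar (g # w) = wstar w @ [gswap g]"
  by (simp add: wstar_def)
lemma wstar_map_Ed[simp]: "wstar (map Ed fs) = rev (map Gh fs)"
  by (simp add: wstar_def comp_def)
lemma length_wstar[simp]: "length (wstar w) = length w" by (simp add: wstar_def)

section \<open>The involution\<close>

locale field_inv = fixes ks :: "'k::field \<Rightarrow> 'k" assumes fi: "field_involution ks"
begin

lemma ks_add: "ks (a + b) = ks a + ks b" using fi by (simp add: field_involution_def)
lemma ks_mult: "ks (a * b) = ks a * ks b" using fi by (simp add: field_involution_def mult.commute)
lemma ks_ks[simp]: "ks (ks a) = a" using fi by (simp add: field_involution_def)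
lemma ks_0[simp]: "ks 0 = 0" using ks_add[of 0 0] by (metis add.right_neutral add_left_cancel)
lemma ks_neg: "ks (- a) = - ks a" using ks_add[of a "-a"] by (simp add: eq_neg_iff_add_eq_0 add.commute)
lemma ks_diff: "ks (a - b) = ks a - ks b" using ks_add[of a "-b"] by (simp add: ks_neg)
lemma ks_eq0[simp]: "ks a = 0 \<longleftrightarrow> a = 0" by (metis ks_0 ks_ks)
lemma ks_1[simp]: "ks 1 = 1"
proof -
  have "ks 1 = ks 1 * ks 1" using ks_mult[of 1 1] by simp
  moreover have "ks 1 \<noteq> 0" by simp
  ultimately show ?thesis by (metis mult_cancel_right1)
qed
lemma ks_sum: "ks (sum f A) = sum (\<lambda>a. ks (f a)) A"
  by (induction A rule: infinite_finite_induct) (auto simp: ks_add)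

lemma fstar_mon[simp]: "fstar ks (mon w) = mon (wstar w)"
  by (rule ext) (auto simp: fstar_def mon_def)
lemma fstar_add: "fstar ks (fadd f g) = fadd (fstar ks f) (fstar ks g)"
  by (rule ext) (simp add: fstar_def fadd_def ks_add)
lemma fstar_sub: "fstar ks (fsub f g) = fsub (fstar ks f) (fstar ks g)"
  by (rule ext) (simp add: fstar_def fsub_def ks_diff)
lemma fstar_scal: "fstar ks (fscal a f) = fscal (ks a) (fstar ks f)"
  by (rule ext) (simp add: fstar_def fscal_def ks_mult)
lemma fstar_zero[simp]: "fstar ks fzero = fzero"
  by (rule ext) (simp add: fstar_def fzero_def)
lemma fstar_sum: "fstar ks (fsum g A) = fsum (\<lambda>a. fstar ks (g a)) A"
  by (rule ext) (simp add: fstar_def fsum_def ks_sum)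

lemma fstar_mul: "fstar ks (fmul f g) = fmul (fstar ks g) (fstar ks f)"
proof
  fix w :: "('a,'b) gen list"
  let ?n = "length w"
  have "fstar ks (fmul f g) w = (\<Sum>i\<in>{0..?n}. ks (g (drop i (wstar w))) * ks (f (take i (wstar w))))"
    by (simp add: fstar_def fmul_def ks_sum ks_mult mult.commute)
  also have "\<dots> = (\<Sum>j\<in>{0..?n}. ks (g (drop (?n - j) (wstar w))) * ks (f (take (?n - j) (wstar w))))"
    by (rule sum.reindex_bij_witness[of _ "\<lambda>j. ?n - j" "\<lambda>j. ?n - j"]) auto
  also have "\<dots> = fmul (fstar ks g) (fstar ks f) w"
    unfolding fmul_def fstar_def
  proof (rule sum.cong)
    fix j assume j: "j \<in> {0..?n}"
    have "wstar (take j w) = drop (?n - j) (wstar w)"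
      by (simp add: wstar_def rev_take flip: take_map)
    moreover have "wstar (drop j w) = take (?n - j) (wstar w)"
      by (simp add: wstar_def rev_drop flip: drop_map)
    ultimately show "ks (g (drop (?n - j) (wstar w))) * ks (f (take (?n - j) (wstar w))) =
        ks (g (wstar (take j w))) * ks (f (wstar (drop j w)))" by simp
  qed simp
  finally show "fstar ks (fmul f g) w = fmul (fstar ks g) (fstar ks f) w" .
qed

lemma Fset_fstar: "f \<in> Fset \<Longrightarrow> fstar ks f \<in> Fset"
proof -
  assume f: "f \<in> Fset"
  have "{w. fstar ks f w \<noteq> 0} = wstar ` {w. f w \<noteq> 0}"
    by (auto simp: fstar_def image_iff intro!: exI[of _ "wstar _"])
  then show ?thesis using f by (auto simp: Fset_def fstar_def)
qed

end

section \<open>The ideal of relations\<close>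

lemma lpa_rels_V: "fsub (mon [V v, V w]) (if v = w then mon [V v] else fzero) \<in> lpa_rels s r"
  unfolding lpa_rels_def by blast
lemma lpa_rels_sE: "fsub (mon [V (s e), Ed e]) (mon [Ed e]) \<in> lpa_rels s r"
  unfolding lpa_rels_def by blast
lemma lpa_rels_Er: "fsub (mon [Ed e, V (r e)]) (mon [Ed e]) \<in> lpa_rels s r"
  unfolding lpa_rels_def by blast
lemma lpa_rels_rG: "fsub (mon [V (r e), Gh e]) (mon [Gh e]) \<in> lpa_rels s r"
  unfolding lpa_rels_def by blast
lemma lpa_rels_Gs: "fsub (mon [Gh e, V (s e)]) (mon [Gh e]) \<in> lpa_rels s r"
  unfolding lpa_rels_def by blast
lemma lpa_rels_CK1: "fsub (mon [Gh e, Ed f]) (if e = f then mon [V (r e)] else fzero) \<in> lpa_rels s r"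
  unfolding lpa_rels_def by blast
lemma lpa_rels_CK2: "regular s v \<Longrightarrow> fsub (mon [V v]) (fsum (\<lambda>e. mon [Ed e, Gh e]) {e. s e = v}) \<in> lpa_rels s r"
  unfolding lpa_rels_def by blast

lemma lpa_relsE:
  assumes "x \<in> lpa_rels s r"
  obtains (V) v w where "x = fsub (mon [V v, V w]) (if v = w then mon [V v] else fzero)"
    | (sE) e where "x = fsub (mon [V (s e), Ed e]) (mon [Ed e])"
    | (Er) e where "x = fsub (mon [Ed e, V (r e)]) (mon [Ed e])"
    | (rG) e where "x = fsub (mon [V (r e), Gh e]) (mon [Gh e])"
    | (Gs) e where "x = fsub (mon [Gh e, V (s e)]) (mon [Gh e])"
    | (CK1) e f where "x = fsub (mon [Gh e, Ed f]) (if e = f then mon [V (r e)] else fzero)"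
    | (CK2) v where "x = fsub (mon [V v]) (fsum (\<lambda>e. mon [Ed e, Gh e]) {e. s e = v})" "regular s v"
  using assms unfolding lpa_rels_def by blast

lemma lpa_rels_Fset: "x \<in> lpa_rels s r \<Longrightarrow> x \<in> Fset"
  unfolding lpa_rels_def
  by (auto intro!: Fset_sub Fset_mon Fset_fsum simp: regular_def)

lemma lpa_ideal_Fset: "x \<in> lpa_ideal s r \<Longrightarrow> x \<in> Fset"
  by (induction rule: lpa_ideal.induct)
     (auto intro: lpa_rels_Fset Fset_add Fset_scal Fset_mul)

lemma lpa_ideal_sub: "x \<in> lpa_ideal s r \<Longrightarrow> y \<in> lpa_ideal s r \<Longrightarrow> fsub x y \<in> lpa_ideal s r"
  unfolding fsub_as_add by (intro lpa_ideal.add lpa_ideal.scal)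

lemma lpa_ideal_fsum: "(\<And>a. a \<in> A \<Longrightarrow> g a \<in> lpa_ideal s r) \<Longrightarrow> fsum g A \<in> lpa_ideal s r"
proof (induction A rule: infinite_finite_induct)
  case (infinite A)
  then have "fsum g A = fzero" by (rule_tac ext) (simp add: fsum_def fzero_def)
  then show ?case by (simp add: lpa_ideal.zero)
next
  case empty then show ?case by (simp add: lpa_ideal.zero)
next
  case (insert x F) then show ?case by (simp add: fsum_insert lpa_ideal.add)
qed

lemma lpa_ideal_fsum_list: "set xs \<subseteq> lpa_ideal s r \<Longrightarrow> fsum_list xs \<in> lpa_ideal s r"
  by (induction xs) (auto intro: lpa_ideal.add lpa_ideal.zero)

lemma lpa_ideal_mon_left: "x \<in> lpa_ideal s r \<Longrightarrow> fmul (mon a) x \<in> lpa_ideal s r"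
  by (cases "a = []") (auto intro: lpa_ideal.mult_left Fset_mon)
lemma lpa_ideal_mon_right: "x \<in> lpa_ideal s r \<Longrightarrow> fmul x (mon a) \<in> lpa_ideal s r"
  by (cases "a = []") (auto intro: lpa_ideal.mult_right Fset_mon)

definition lpa_cong :: "('e \<Rightarrow> 'v) \<Rightarrow> ('e \<Rightarrow> 'v) \<Rightarrow> (('v, 'e) gen list \<Rightarrow> 'k::field) \<Rightarrow> (('v, 'e) gen list \<Rightarrow> 'k) \<Rightarrow> bool" where
  "lpa_cong s r x y \<longleftrightarrow> fsub x y \<in> lpa_ideal s r"

lemma lpa_cong_refl[simp]: "lpa_cong s r x x"
  by (simp add: lpa_cong_def fsub_self lpa_ideal.zero)
lemma lpa_cong_sym: "lpa_cong s r x y \<Longrightarrow> lpa_cong s r y x"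
proof -
  assume "lpa_cong s r x y"
  then have "fscal (-1) (fsub x y) \<in> lpa_ideal s r" by (simp add: lpa_cong_def lpa_ideal.scal)
  moreover have "fscal (-1) (fsub x y) = fsub y x" by (rule ext) (simp add: fscal_def fsub_def)
  ultimately show ?thesis by (simp add: lpa_cong_def)
qed
lemma lpa_cong_trans[trans]: "lpa_cong s r x y \<Longrightarrow> lpa_cong s r y z \<Longrightarrow> lpa_cong s r x z"
proof -
  assume "lpa_cong s r x y" "lpa_cong s r y z"
  then have "fadd (fsub x y) (fsub y z) \<in> lpa_ideal s r" by (simp add: lpa_cong_def lpa_ideal.add)
  moreover have "fadd (fsub x y) (fsub y z) = fsub x z" by (rule ext) (simp add: fadd_def fsub_def)
  ultimately show ?thesis by (simp add: lpa_cong_def)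
qed
lemma lpa_cong_sub: "lpa_cong s r x y \<Longrightarrow> lpa_cong s r x' y' \<Longrightarrow> lpa_cong s r (fsub x x') (fsub y y')"
proof -
  assume "lpa_cong s r x y" "lpa_cong s r x' y'"
  then have "fsub (fsub x y) (fsub x' y') \<in> lpa_ideal s r" by (simp add: lpa_cong_def lpa_ideal_sub)
  moreover have "fsub (fsub x y) (fsub x' y') = fsub (fsub x x') (fsub y y')" by (rule ext) (simp add: fsub_def)
  ultimately show ?thesis by (simp add: lpa_cong_def)
qed
lemma lpa_cong_scal: "lpa_cong s r x y \<Longrightarrow> lpa_cong s r (fscal a x) (fscal a y)"
proof -
  assume "lpa_cong s r x y"
  then have "fscal a (fsub x y) \<in> lpa_ideal s r" by (simp add: lpa_cong_def lpa_ideal.scal)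
  moreover have "fscal a (fsub x y) = fsub (fscal a x) (fscal a y)" by (rule ext) (simp add: fscal_def fsub_def algebra_simps)
  ultimately show ?thesis by (simp add: lpa_cong_def)
qed
lemma lpa_cong_fsum: "(\<And>a. a \<in> A \<Longrightarrow> lpa_cong s r (g a) (h a)) \<Longrightarrow> lpa_cong s r (fsum g A) (fsum h A)"
proof -
  assume "\<And>a. a \<in> A \<Longrightarrow> lpa_cong s r (g a) (h a)"
  then have "fsum (\<lambda>a. fsub (g a) (h a)) A \<in> lpa_ideal s r" by (simp add: lpa_cong_def lpa_ideal_fsum)
  moreover have "fsum (\<lambda>a. fsub (g a) (h a)) A = fsub (fsum g A) (fsum h A)"
    by (rule ext) (simp add: fsum_def fsub_def sum_subtractf)
  ultimately show ?thesis by (simp add: lpa_cong_def)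
qed
lemma lpa_cong_mul_left: "lpa_cong s r x y \<Longrightarrow> f \<in> Fset \<Longrightarrow> lpa_cong s r (fmul f x) (fmul f y)"
  by (simp add: lpa_cong_def lpa_ideal.mult_left flip: fmul_sub_right)
lemma lpa_cong_mul_right: "lpa_cong s r x y \<Longrightarrow> f \<in> Fset \<Longrightarrow> lpa_cong s r (fmul x f) (fmul y f)"
  by (simp add: lpa_cong_def lpa_ideal.mult_right flip: fmul_sub_left)
lemma lpa_cong_mon_left: "lpa_cong s r x y \<Longrightarrow> lpa_cong s r (fmul (mon a) x) (fmul (mon a) y)"
  by (simp add: lpa_cong_def lpa_ideal_mon_left flip: fmul_sub_right)
lemma lpa_cong_mon_right: "lpa_cong s r x y \<Longrightarrow> lpa_cong s r (fmul x (mon a)) (fmul y (mon a))"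
  by (simp add: lpa_cong_def lpa_ideal_mon_right flip: fmul_sub_left)
lemma lpa_cong_mul: "lpa_cong s r x y \<Longrightarrow> lpa_cong s r x' y' \<Longrightarrow> x \<in> Fset \<Longrightarrow> y' \<in> Fset \<Longrightarrow> lpa_cong s r (fmul x x') (fmul y y')"
  by (meson lpa_cong_mul_left lpa_cong_mul_right lpa_cong_trans)

lemma lpa_cong_idempotent_diff:
  assumes "lpa_cong s r (fmul x x) x" "lpa_cong s r (fmul y x) y"
    and "lpa_cong s r (fmul x y) y" "lpa_cong s r (fmul y y) y"
  shows "lpa_cong s r (fmul (fsub x y) (fsub x y)) (fsub x y)"
proof -
  have "lpa_cong s r (fsub (fsub (fmul x x) (fmul y x)) (fsub (fmul x y) (fmul y y)))
      (fsub (fsub x y) (fsub y y))"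
    using assms by (intro lpa_cong_sub)
  moreover have "fsub (fsub x y) (fsub y y) = fsub x y"
    by (rule ext) (simp add: fsub_def)
  ultimately show ?thesis by (simp add: fmul_sub_left fmul_sub_right)
qed

lemma lpa_cong_fzero_iff: "lpa_cong s r x fzero \<longleftrightarrow> x \<in> lpa_ideal s r"
proof -
  have "fsub x fzero = x" by (rule ext) (simp add: fsub_def fzero_def)
  then show ?thesis by (simp add: lpa_cong_def)
qed

lemma lpa_rels_cong: "fsub x y \<in> lpa_rels s r \<Longrightarrow> lpa_cong s r x y"
  by (simp add: lpa_cong_def lpa_ideal.rel)

context field_inv begin

lemma lpa_rels_fstar:
  assumes "x \<in> lpa_rels s r"
  shows "fstar ks x \<in> lpa_rels s r"
  using assms
proof (cases rule: lpa_relsE)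
  case (V v w) then show ?thesis using lpa_rels_V[of w v] by (auto simp: fstar_sub wstar_def)
next
  case (sE e) then show ?thesis using lpa_rels_Gs by (simp add: fstar_sub wstar_def)
next
  case (Er e) then show ?thesis using lpa_rels_rG by (simp add: fstar_sub wstar_def)
next
  case (rG e) then show ?thesis using lpa_rels_Er by (simp add: fstar_sub wstar_def)
next
  case (Gs e) then show ?thesis using lpa_rels_sE by (simp add: fstar_sub wstar_def)
next
  case (CK1 e f) then show ?thesis using lpa_rels_CK1[of f e] by (auto simp: fstar_sub wstar_def)
next
  case (CK2 v) then show ?thesis using lpa_rels_CK2 by (simp add: fstar_sub fstar_sum wstar_def)
qed

lemma lpa_ideal_fstar: "x \<in> lpa_ideal s r \<Longrightarrow> fstar ks x \<in> lpa_ideal s r"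
proof (induction rule: lpa_ideal.induct)
  case (rel x) then show ?case by (intro lpa_ideal.rel lpa_rels_fstar)
next
  case zero then show ?case by (simp add: lpa_ideal.zero)
next
  case (add x y) then show ?case by (simp add: fstar_add lpa_ideal.add)
next
  case (scal x a) then show ?case by (simp add: fstar_scal lpa_ideal.scal)
next
  case (mult_left x f) then show ?case by (simp add: fstar_mul lpa_ideal.mult_right Fset_fstar)
next
  case (mult_right x f) then show ?case by (simp add: fstar_mul lpa_ideal.mult_left Fset_fstar)
qed

lemma lpa_cong_fstar: "lpa_cong s r x y \<Longrightarrow> lpa_cong s r (fstar ks x) (fstar ks y)"
  by (simp add: lpa_cong_def lpa_ideal_fstar flip: fstar_sub)

end

section \<open>Congruences of monomials\<close>

text \<open>The coefficient field enters relations between monomials only through its type.\<close>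

definition wcong :: "('e \<Rightarrow> 'v) \<Rightarrow> ('e \<Rightarrow> 'v) \<Rightarrow> ('v, 'e) gen list \<Rightarrow> ('v, 'e) gen list \<Rightarrow> 'k::field itself \<Rightarrow> bool" where
  "wcong s r u v (_::'k itself) \<longleftrightarrow> lpa_cong s r (mon u :: _ \<Rightarrow> 'k) (mon v)"

definition wnull :: "('e \<Rightarrow> 'v) \<Rightarrow> ('e \<Rightarrow> 'v) \<Rightarrow> ('v, 'e) gen list \<Rightarrow> 'k::field itself \<Rightarrow> bool" where
  "wnull s r u (_::'k itself) \<longleftrightarrow> (mon u :: _ \<Rightarrow> 'k) \<in> lpa_ideal s r"

lemma wcong_context: "wcong s r u v K \<Longrightarrow> wcong s r (a @ u @ b) (a @ v @ b) K"
  unfolding wcong_def mon_append3 by (intro lpa_cong_mon_left lpa_cong_mon_right)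

lemma wnull_context: "wnull s r u K \<Longrightarrow> wnull s r (a @ u @ b) K"
  unfolding wnull_def mon_append3 by (intro lpa_ideal_mon_left lpa_ideal_mon_right)

lemma wcong_refl[simp]: "wcong s r u u K" by (simp add: wcong_def)
lemma wcong_sym: "wcong s r u v K \<Longrightarrow> wcong s r v u K" by (simp add: wcong_def lpa_cong_sym)
lemma wcong_trans[trans]: "wcong s r u v K \<Longrightarrow> wcong s r v w K \<Longrightarrow> wcong s r u w K"
  unfolding wcong_def by (rule lpa_cong_trans)
lemma wcong_wnull: "wcong s r u v K \<Longrightarrow> wnull s r v K \<Longrightarrow> wnull s r u K"
  unfolding wcong_def wnull_def
  by (meson lpa_cong_trans lpa_cong_fzero_iff)
lemma wcong_VV: "wcong s r [V a, V a] [V a] K"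
  unfolding wcong_def using lpa_rels_cong[OF lpa_rels_V[of a a]] by simp
lemma wnull_VV: "a \<noteq> b \<Longrightarrow> wnull s r [V a, V b] K"
  unfolding wnull_def using lpa_rels_cong[OF lpa_rels_V[of a b]] by (simp add: lpa_cong_fzero_iff)
lemma wcong_sE: "wcong s r [V (s e), Ed e] [Ed e] K"
  unfolding wcong_def by (rule lpa_rels_cong[OF lpa_rels_sE])
lemma wcong_Er: "wcong s r [Ed e, V (r e)] [Ed e] K"
  unfolding wcong_def by (rule lpa_rels_cong[OF lpa_rels_Er])
lemma wcong_rG: "wcong s r [V (r e), Gh e] [Gh e] K"
  unfolding wcong_def by (rule lpa_rels_cong[OF lpa_rels_rG])
lemma wcong_Gs: "wcong s r [Gh e, V (s e)] [Gh e] K"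
  unfolding wcong_def by (rule lpa_rels_cong[OF lpa_rels_Gs])
lemma wcong_CK1: "wcong s r [Gh e, Ed e] [V (r e)] K"
  unfolding wcong_def using lpa_rels_cong[OF lpa_rels_CK1[of e e]] by simp
lemma wnull_CK1: "e \<noteq> f \<Longrightarrow> wnull s r [Gh e, Ed f] K"
  unfolding wnull_def using lpa_rels_cong[OF lpa_rels_CK1[of e f]] by (simp add: lpa_cong_fzero_iff)

lemma wnull_EV: "a \<noteq> r e \<Longrightarrow> wnull s r [Ed e, V a] K"
proof -
  assume a: "a \<noteq> r e"
  have "wcong s r [Ed e, V a] ([Ed e, V (r e)] @ [V a]) K"
    using wcong_context[OF wcong_sym[OF wcong_Er[of s r e]], of "[]" "[V a]"] by simp
  moreover have "wnull s r ([Ed e] @ [V (r e), V a] @ []) K"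
    using a by (intro wnull_context wnull_VV) auto
  ultimately show ?thesis by (auto intro: wcong_wnull)
qed

lemma wnull_GV: "a \<noteq> s e \<Longrightarrow> wnull s r [Gh e, V a] K"
proof -
  assume a: "a \<noteq> s e"
  have "wcong s r [Gh e, V a] ([Gh e, V (s e)] @ [V a]) K"
    using wcong_context[OF wcong_sym[OF wcong_Gs[of s r e]], of "[]" "[V a]"] by simp
  moreover have "wnull s r ([Gh e] @ [V (s e), V a] @ []) K"
    using a by (intro wnull_context wnull_VV) auto
  ultimately show ?thesis by (auto intro: wcong_wnull)
qed

text \<open>The identity is an involution of the field, so the ideal is invariant under reversal of
  words whatever the involution of the coefficients.\<close>

lemma wcong_wstar:
  fixes K :: "'k::field itself"
  assumes "wcong s r u v K"
  shows "wcong s r (wstar u) (wstar v) K"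
proof -
  interpret field_inv "\<lambda>a::'k. a" by unfold_locales (simp add: field_involution_def)
  have "lpa_cong s r (fstar (\<lambda>a. a) (mon u)) (fstar (\<lambda>a. a) (mon v) :: _ \<Rightarrow> 'k)"
    using assms unfolding wcong_def by (rule lpa_cong_fstar)
  then show ?thesis unfolding wcong_def by simp
qed

section \<open>Walks and the normal form of monomials\<close>

fun walk :: "('e \<Rightarrow> 'v) \<Rightarrow> ('e \<Rightarrow> 'v) \<Rightarrow> 'v \<Rightarrow> 'e list \<Rightarrow> bool" where
  "walk s r v [] = True"
| "walk s r v (e # es) \<longleftrightarrow> s e = v \<and> walk s r (r e) es"

fun walk_end :: "('e \<Rightarrow> 'v) \<Rightarrow> 'v \<Rightarrow> 'e list \<Rightarrow> 'v" where
  "walk_end r v [] = v"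
| "walk_end r v (e # es) = walk_end r (r e) es"

definition walk_word :: "'v \<Rightarrow> 'e list \<Rightarrow> ('v, 'e) gen list" where
  "walk_word v es = V v # map Ed es"

lemma walk_append: "walk s r v (es @ fs) \<longleftrightarrow> walk s r v es \<and> walk s r (walk_end r v es) fs"
  by (induction es arbitrary: v) auto

lemma walk_end_append: "walk_end r v (es @ fs) = walk_end r (walk_end r v es) fs"
  by (induction es arbitrary: v) simp_all

lemma walk_end_last: "es \<noteq> [] \<Longrightarrow> walk_end r v es = r (last es)"
  by (induction es arbitrary: v) auto

lemma walk_end_snoc[simp]: "walk_end r v (xs @ [g]) = r g"
  by (simp add: walk_end_append)

lemma wstar_walk_word: "wstar (walk_word u fs) = rev (map Gh fs) @ [V u]"
  unfolding wstar_def walk_word_def by (simp add: map_map comp_def)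

lemma walk_word_end: "walk s r a es \<Longrightarrow> wcong s r (walk_word a es @ [V (walk_end r a es)]) (walk_word a es) K"
proof (cases es rule: rev_cases)
  case Nil then show ?thesis by (simp add: walk_word_def wcong_VV)
next
  case (snoc es' e)
  then have "walk_word a es @ [V (walk_end r a es)] = (V a # map Ed es') @ [Ed e, V (r e)] @ []"
    by (simp add: walk_word_def walk_end_last)
  moreover have "walk_word a es = (V a # map Ed es') @ [Ed e] @ []" using snoc by (simp add: walk_word_def)
  ultimately show ?thesis by (metis wcong_context wcong_Er)
qed

lemma walk_word_append: "walk s r a es \<Longrightarrow> wcong s r (walk_word a es @ walk_word (walk_end r a es) \<gamma>) (walk_word a (es @ \<gamma>)) K"
  using wcong_context[OF walk_word_end[of s r a es K], where a="[]" and b="map Ed \<gamma>"]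
  by (simp add: walk_word_def)

text \<open>A quadruple (a, es, u, fs) stands for the monomial p q^* with p the walk es from a and q the
  walk fs from u.\<close>

type_synonym ('v, 'e) pq = "'v \<times> 'e list \<times> 'v \<times> 'e list"

fun pq_word :: "('v, 'e) pq \<Rightarrow> ('v, 'e) gen list" where
  "pq_word (a, es, u, fs) = walk_word a es @ wstar (walk_word u fs)"
declare pq_word.simps[simp del]

lemma pq_word_eq: "pq_word (a, es, u, fs) = V a # map Ed es @ rev (map Gh fs) @ [V u]"
  unfolding pq_word.simps wstar_walk_word by (simp add: walk_word_def)

lemma pq_word_ne_Nil[simp]: "pq_word \<alpha> \<noteq> []"
  by (cases \<alpha>) (simp add: pq_word_eq)

fun pq_ok :: "('e \<Rightarrow> 'v) \<Rightarrow> ('e \<Rightarrow> 'v) \<Rightarrow> ('v, 'e) pq \<Rightarrow> bool" where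
  "pq_ok s r (a, es, u, fs) \<longleftrightarrow> walk s r a es \<and> walk s r u fs \<and> walk_end r a es = walk_end r u fs"
declare pq_ok.simps[simp del]

definition pq_reducible :: "('e \<Rightarrow> 'v) \<Rightarrow> ('e \<Rightarrow> 'v) \<Rightarrow> ('v, 'e) gen list \<Rightarrow> 'k::field itself \<Rightarrow> bool" where
  "pq_reducible s r w K \<longleftrightarrow> wnull s r w K \<or> (\<exists>\<alpha>. pq_ok s r \<alpha> \<and> wcong s r w (pq_word \<alpha>) K)"

lemma pq_reducible_wcong: "wcong s r w w' K \<Longrightarrow> pq_reducible s r w' K \<Longrightarrow> pq_reducible s r w K"
  unfolding pq_reducible_def by (blast intro: wcong_wnull wcong_trans)

lemma pq_reducible_pq_word: "pq_ok s r \<alpha> \<Longrightarrow> pq_reducible s r (pq_word \<alpha>) K"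
  unfolding pq_reducible_def using wcong_refl by blast

lemma pq_reducible_V_cons:
  assumes "pq_ok s r (a, es, u, fs)"
  shows "pq_reducible s r (V b # pq_word (a, es, u, fs)) K"
proof -
  let ?w = "map Ed es @ rev (map Gh fs) @ [V u]"
  show ?thesis
  proof (cases "b = a")
    case True
    have "wcong s r ([] @ [V a, V a] @ ?w) ([] @ [V a] @ ?w) K"
      by (intro wcong_context wcong_VV)
    with True show ?thesis
      by (intro pq_reducible_wcong[OF _ pq_reducible_pq_word[OF assms]]) (simp add: pq_word_eq)
  next
    case False
    then have "wnull s r ([] @ [V b, V a] @ ?w) K" by (intro wnull_context wnull_VV)
    then show ?thesis by (simp add: pq_reducible_def pq_word_eq)
  qed
qed

lemma pq_reducible_Ed_cons:
  assumes "pq_ok s r (a, es, u, fs)"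
  shows "pq_reducible s r (Ed e # pq_word (a, es, u, fs)) K"
proof -
  let ?w = "map Ed es @ rev (map Gh fs) @ [V u]"
  show ?thesis
  proof (cases "a = r e")
    case True
    have "wcong s r ([] @ [Ed e, V (r e)] @ ?w) ([] @ [Ed e] @ ?w) K"
      by (intro wcong_context wcong_Er)
    also have "wcong s r ([] @ [Ed e] @ ?w) ([] @ [V (s e), Ed e] @ ?w) K"
      by (intro wcong_context wcong_sym[OF wcong_sE])
    finally have "wcong s r (Ed e # pq_word (a, es, u, fs)) (pq_word (s e, e # es, u, fs)) K"
      using True by (simp add: pq_word_eq)
    moreover have "pq_ok s r (s e, e # es, u, fs)" using assms True by (simp add: pq_ok.simps)
    ultimately show ?thesis unfolding pq_reducible_def by blast
  next
    case False
    then have "wnull s r ([] @ [Ed e, V a] @ ?w) K" by (intro wnull_context wnull_EV)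
    then show ?thesis by (simp add: pq_reducible_def pq_word_eq)
  qed
qed

lemma pq_reducible_Gh_cons_edge:
  assumes "pq_ok s r (a, e' # es, u, fs)"
  shows "pq_reducible s r (Gh e # pq_word (a, e' # es, u, fs)) K"
proof -
  let ?w = "map Ed es @ rev (map Gh fs) @ [V u]"
  from assms have a: "a = s e'" by (simp add: pq_ok.simps)
  have cancel: "wcong s r (Gh e # pq_word (a, e' # es, u, fs)) ([] @ [Gh e, Ed e'] @ ?w) K"
    using a wcong_context[OF wcong_sE[of s r e' K], where a="[Gh e]" and b="?w"]
    by (simp add: pq_word_eq)
  show ?thesis
  proof (cases "e = e'")
    case True
    have "wcong s r ([] @ [Gh e, Ed e'] @ ?w) ([] @ [V (r e)] @ ?w) K"
      using True by (intro wcong_context) (simp add: wcong_CK1)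
    with cancel have "wcong s r (Gh e # pq_word (a, e' # es, u, fs)) (pq_word (r e, es, u, fs)) K"
      by (simp add: pq_word_eq wcong_trans)
    moreover have "pq_ok s r (r e, es, u, fs)" using assms True by (simp add: pq_ok.simps)
    ultimately show ?thesis unfolding pq_reducible_def by blast
  next
    case False
    then have "wnull s r ([] @ [Gh e, Ed e'] @ ?w) K" by (intro wnull_context wnull_CK1)
    with cancel show ?thesis by (simp add: pq_reducible_def wcong_wnull)
  qed
qed

lemma pq_reducible_Gh_cons_vertex:
  assumes "pq_ok s r (a, [], u, fs)"
  shows "pq_reducible s r (Gh e # pq_word (a, [], u, fs)) K"
proof -
  let ?w = "rev (map Gh fs) @ [V u]"
  show ?thesis
  proof (cases "a = s e")
    case True
    have "wcong s r ([] @ [Gh e, V (s e)] @ ?w) ([] @ [Gh e] @ ?w) K"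
      by (intro wcong_context wcong_Gs)
    also have "wcong s r ([] @ [Gh e] @ ?w) ([] @ [V (r e), Gh e] @ ?w) K"
      by (intro wcong_context wcong_sym[OF wcong_rG])
    finally have "wcong s r (Gh e # pq_word (a, [], u, fs)) (pq_word (r e, [], u, fs @ [e])) K"
      using True by (simp add: pq_word_eq)
    moreover have "pq_ok s r (r e, [], u, fs @ [e])"
      using assms True by (simp add: pq_ok.simps walk_append walk_end_append)
    ultimately show ?thesis unfolding pq_reducible_def by blast
  next
    case False
    then have "wnull s r ([] @ [Gh e, V a] @ ?w) K" by (intro wnull_context wnull_GV)
    then show ?thesis by (simp add: pq_reducible_def pq_word_eq)
  qed
qed

lemma pq_reducible_cons: "pq_ok s r \<alpha> \<Longrightarrow> pq_reducible s r (g # pq_word \<alpha>) K"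
proof (cases \<alpha>)
  case (fields a es u fs)
  assume ok: "pq_ok s r \<alpha>"
  show ?thesis
  proof (cases g)
    case (V b) then show ?thesis using ok fields by (simp add: pq_reducible_V_cons)
  next
    case (Ed e) then show ?thesis using ok fields by (simp add: pq_reducible_Ed_cons)
  next
    case (Gh e) then show ?thesis
      using ok fields pq_reducible_Gh_cons_edge pq_reducible_Gh_cons_vertex by (cases es) auto
  qed
qed

lemma pq_reducible_single: "pq_reducible s r [g] K"
proof (cases g)
  case (V v)
  have "wcong s r [V v] (pq_word (v, [], v, [])) K" by (simp add: pq_word_eq wcong_sym wcong_VV)
  moreover have "pq_ok s r (v, [], v, [])" by (simp add: pq_ok.simps)
  ultimately show ?thesis using V unfolding pq_reducible_def by blast
next
  case (Ed e)
  have "wcong s r [Ed e] [V (s e), Ed e] K" by (rule wcong_sym, rule wcong_sE)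
  also have "wcong s r [V (s e), Ed e] [V (s e), Ed e, V (r e)] K"
    using wcong_context[OF wcong_sym[OF wcong_Er], where a="[V (s e)]" and b="[]"] by simp
  finally have "wcong s r [Ed e] (pq_word (s e, [e], r e, [])) K" by (simp add: pq_word_eq)
  moreover have "pq_ok s r (s e, [e], r e, [])" by (simp add: pq_ok.simps)
  ultimately show ?thesis using Ed unfolding pq_reducible_def by blast
next
  case (Gh e)
  have "wcong s r [Gh e] [V (r e), Gh e] K" by (rule wcong_sym, rule wcong_rG)
  also have "wcong s r [V (r e), Gh e] [V (r e), Gh e, V (s e)] K"
    using wcong_context[OF wcong_sym[OF wcong_Gs], where a="[V (r e)]" and b="[]"] by simp
  finally have "wcong s r [Gh e] (pq_word (r e, [], s e, [e])) K" by (simp add: pq_word_eq)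
  moreover have "pq_ok s r (r e, [], s e, [e])" by (simp add: pq_ok.simps)
  ultimately show ?thesis using Gh unfolding pq_reducible_def by blast
qed

theorem pq_reducible_word: "w \<noteq> [] \<Longrightarrow> pq_reducible s r w K"
proof (induction w)
  case Nil then show ?case by simp
next
  case (Cons g w)
  show ?case
  proof (cases "w = []")
    case True then show ?thesis by (simp add: pq_reducible_single)
  next
    case False
    then consider "wnull s r w K" | \<alpha> where "pq_ok s r \<alpha>" "wcong s r w (pq_word \<alpha>) K"
      using Cons.IH unfolding pq_reducible_def by blast
    then show ?thesis
    proof cases
      case 1
      then have "wnull s r ([g] @ w @ []) K" by (rule wnull_context)
      then show ?thesis by (simp add: pq_reducible_def)
    next
      case (2 \<alpha>)
      have "wcong s r (g # w) (g # pq_word \<alpha>) K"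
        using wcong_context[OF 2(2), where a="[g]" and b="[]"] by simp
      then show ?thesis using pq_reducible_cons[OF 2(1)] by (rule pq_reducible_wcong)
    qed
  qed
qed

lemma lpa_cong_pq_word_combination:
  fixes z :: "('v, 'e) gen list \<Rightarrow> 'k::field"
  assumes z: "z \<in> Fset"
  obtains A c where "finite A" "\<And>\<alpha>. \<alpha> \<in> A \<Longrightarrow> pq_ok s r \<alpha>"
    and "lpa_cong s r z (fsum (\<lambda>\<alpha>. fscal (c \<alpha>) (mon (pq_word \<alpha>))) A)"
proof -
  let ?S = "{w. z w \<noteq> 0}"
  let ?S1 = "{w \<in> ?S. \<not> wnull s r w TYPE('k)}"
  have fS: "finite ?S" and nS: "[] \<notin> ?S" using z by (auto simp: Fset_def)
  define nf where "nf w = (SOME \<alpha>. pq_ok s r \<alpha> \<and> wcong s r w (pq_word \<alpha>) TYPE('k))" for w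
  have nf: "pq_ok s r (nf w) \<and> wcong s r w (pq_word (nf w)) TYPE('k)" if "w \<in> ?S1" for w
  proof -
    from that nS have "w \<noteq> []" by auto
    from pq_reducible_word[OF this, of s r "TYPE('k)"] that
    obtain \<alpha> where "pq_ok s r \<alpha> \<and> wcong s r w (pq_word \<alpha>) TYPE('k)"
      by (auto simp: pq_reducible_def)
    then show ?thesis unfolding nf_def by (rule someI)
  qed
  have "lpa_cong s r (fsum (\<lambda>w. fscal (z w) (mon w)) ?S)
      (fsum (\<lambda>w. if w \<in> ?S1 then fscal (z w) (mon (pq_word (nf w))) else fzero) ?S)"
  proof (rule lpa_cong_fsum)
    fix w assume w: "w \<in> ?S"
    show "lpa_cong s r (fscal (z w) (mon w)) (if w \<in> ?S1 then fscal (z w) (mon (pq_word (nf w))) else fzero)"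
    proof (cases "w \<in> ?S1")
      case True then show ?thesis using nf[OF True] by (simp add: wcong_def lpa_cong_scal)
    next
      case False
      then have "fscal (z w) (mon w) \<in> lpa_ideal s r" using w by (simp add: wnull_def lpa_ideal.scal)
      then show ?thesis using False by (auto simp: lpa_cong_fzero_iff)
    qed
  qed
  then have "lpa_cong s r z (fsum (\<lambda>w. fscal (z w) (mon (pq_word (nf w)))) ?S1)"
    using fsum_mon_expansion[of z] z fS by (simp add: Fset_def fsum_if_filter)
  moreover have "fsum (\<lambda>w. fscal (z w) (mon (pq_word (nf w)))) ?S1
      = fsum (\<lambda>\<alpha>. fscal (\<Sum>w\<in>{w \<in> ?S1. nf w = \<alpha>}. z w) (mon (pq_word \<alpha>))) (nf ` ?S1)"
    using fS fsum_fscal_image[of ?S1 z "\<lambda>\<alpha>. mon (pq_word \<alpha>)" nf] by simp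
  ultimately show ?thesis
    by (intro that[of "nf ` ?S1" "\<lambda>\<alpha>. \<Sum>w\<in>{w \<in> ?S1. nf w = \<alpha>}. z w"]) (use nf fS in auto)
qed

definition walk_path :: "'v \<Rightarrow> 'e list \<Rightarrow> ('v, 'e) path" where
  "walk_path a es = (if es = [] then PV a else PE es)"

lemma walk_valid_path: "walk s r a es \<Longrightarrow> valid_path s r (walk_path a es)"
proof (induction es arbitrary: a)
  case Nil then show ?case by (simp add: walk_path_def)
next
  case (Cons e es)
  then have IH: "valid_path s r (walk_path (r e) es)" by simp
  show ?case
  proof (cases es)
    case Nil then show ?thesis by (simp add: walk_path_def)
  next
    case (Cons e' es')
    with IH have 1: "\<forall>i. Suc i < length es \<longrightarrow> r (es ! i) = s (es ! Suc i)" by (simp add: walk_path_def)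
    have 2: "r e = s e'" using Cons.prems Cons by simp
    show ?thesis unfolding walk_path_def using 1 2 Cons
      by (auto simp: nth_Cons split: nat.splits)
  qed
qed

lemma path_range_walk_path: "path_range r (walk_path a es) = walk_end r a es"
  by (simp add: walk_path_def walk_end_last)

lemma walk_path_eq_iff: "walk s r a es \<Longrightarrow> walk s r u fs \<Longrightarrow> walk_path a es = walk_path u fs \<longleftrightarrow> a = u \<and> es = fs"
  by (cases es; cases fs) (auto simp: walk_path_def)

lemma walk_word_path_word: "wcong s r (V a # map Ed es @ X) (path_word (walk_path a es) @ X) K" if "walk s r a es"
proof (cases es)
  case Nil then show ?thesis by (simp add: walk_path_def)
next
  case (Cons e es')
  with that have "a = s e" by simp
  then show ?thesis using wcong_context[OF wcong_sE[of s r e], where a="[]" and b="map Ed es' @ X"] Cons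
    by (simp add: walk_path_def)
qed

lemma wstar_walk_word_path_word: "wcong s r (Y @ rev (map Gh fs) @ [V u]) (Y @ wstar (path_word (walk_path u fs))) K" if "walk s r u fs"
proof (cases fs)
  case Nil then show ?thesis by (simp add: walk_path_def)
next
  case (Cons f fs')
  with that have "u = s f" by simp
  then show ?thesis using wcong_context[OF wcong_Gs[of s r f], where a="Y @ rev (map Gh fs')" and b="[]"] Cons
    by (simp add: walk_path_def comp_def)
qed

section \<open>Products of normal monomials\<close>

lemma ghost_walk_Nil_left:
  "wstar (walk_word u []) @ walk_word u' fs' = [] @ [V u, V u'] @ map Ed fs'"
  by (simp add: wstar_walk_word walk_word_def)

lemma ghost_walk_Nil_right:
  "wstar (walk_word u fs) @ walk_word u' [] = rev (map Gh fs) @ [V u, V u'] @ []"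
  by (simp add: wstar_walk_word walk_word_def)

lemma ghost_walk_Cons:
  "wstar (walk_word u (f # fs)) @ walk_word u' (f' # fs')
     = rev (map Gh fs) @ [Gh f, V u, V u', Ed f'] @ map Ed fs'"
  by (simp add: wstar_walk_word walk_word_def)

lemma wcong_ghost_vertex_edge:
  assumes "s f' = u"
  shows "wcong s r (X @ [Gh f, V u, V u, Ed f'] @ Y) (X @ [Gh f, Ed f'] @ Y) K"
proof -
  have "wcong s r (X @ [Gh f, V u, V u, Ed f'] @ Y) (X @ [Gh f, V u, Ed f'] @ Y) K"
    using wcong_context[OF wcong_VV[of s r u K], where a="X @ [Gh f]" and b="Ed f' # Y"] by simp
  also have "wcong s r (X @ [Gh f, V u, Ed f'] @ Y) (X @ [Gh f, Ed f'] @ Y) K"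
    using wcong_context[OF wcong_sE[of s r f' K], where a="X @ [Gh f]" and b=Y] assms by simp
  finally show ?thesis .
qed

lemma ghost_walk_step:
  assumes "s f' = u'"
  shows "u = u' \<and> f = f' \<Longrightarrow> wcong s r (wstar (walk_word u (f # fs)) @ walk_word u' (f' # fs'))
            (wstar (walk_word (r f) fs) @ walk_word (r f) fs') K"
    and "\<not> (u = u' \<and> f = f') \<Longrightarrow> wnull s r (wstar (walk_word u (f # fs)) @ walk_word u' (f' # fs')) K"
proof -
  let ?X = "rev (map Gh fs)" and ?Y = "map Ed fs'"
  show "wcong s r (wstar (walk_word u (f # fs)) @ walk_word u' (f' # fs'))
      (wstar (walk_word (r f) fs) @ walk_word (r f) fs') K" if "u = u' \<and> f = f'"
  proof -
    have "wcong s r (?X @ [Gh f, V u, V u', Ed f'] @ ?Y) (?X @ [Gh f, Ed f'] @ ?Y) K"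
      using that assms wcong_ghost_vertex_edge[of s f' u' r ?X f ?Y K] by simp
    also have "wcong s r (?X @ [Gh f, Ed f'] @ ?Y) (?X @ [V (r f)] @ ?Y) K"
      using that by (intro wcong_context) (simp add: wcong_CK1)
    also have "wcong s r (?X @ [V (r f)] @ ?Y) (?X @ [V (r f), V (r f)] @ ?Y) K"
      by (intro wcong_context wcong_sym[OF wcong_VV])
    finally show ?thesis by (simp add: ghost_walk_Cons wstar_walk_word walk_word_def)
  qed
  show "wnull s r (wstar (walk_word u (f # fs)) @ walk_word u' (f' # fs')) K" if "\<not> (u = u' \<and> f = f')"
  proof (cases "u = u'")
    case True
    with that have "f \<noteq> f'" by simp
    then have "wnull s r (?X @ [Gh f, Ed f'] @ ?Y) K" by (intro wnull_context wnull_CK1)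
    then show ?thesis
      using wcong_ghost_vertex_edge[of s f' u' r ?X f ?Y K] True assms
      by (simp add: ghost_walk_Cons wcong_wnull)
  next
    case False
    then have "wnull s r ((?X @ [Gh f]) @ [V u, V u'] @ (Ed f' # ?Y)) K"
      by (intro wnull_context wnull_VV)
    then show ?thesis by (simp add: ghost_walk_Cons)
  qed
qed

lemma ghost_walk_product:
  assumes "walk s r u fs" "walk s r u' fs'"
  shows "(u = u' \<longrightarrow> fs' = fs @ \<gamma> \<longrightarrow> wcong s r (wstar (walk_word u fs) @ walk_word u' fs') (walk_word (walk_end r u fs) \<gamma>) K) \<and>
         (u = u' \<longrightarrow> fs = fs' @ \<gamma> \<longrightarrow> wcong s r (wstar (walk_word u fs) @ walk_word u' fs') (wstar (walk_word (walk_end r u' fs') \<gamma>)) K) \<and>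
         ((u \<noteq> u' \<or> (\<forall>\<gamma>. fs' \<noteq> fs @ \<gamma> \<and> fs \<noteq> fs' @ \<gamma>)) \<longrightarrow> wnull s r (wstar (walk_word u fs) @ walk_word u' fs') K)"
  using assms
proof (induction fs arbitrary: u u' fs' \<gamma>)
  case Nil
  have "wcong s r ([] @ [V u, V u] @ map Ed fs') ([] @ [V u] @ map Ed fs') K"
    by (intro wcong_context wcong_VV)
  moreover have "u \<noteq> u' \<Longrightarrow> wnull s r ([] @ [V u, V u'] @ map Ed fs') K"
    by (intro wnull_context wnull_VV)
  ultimately show ?case
    unfolding ghost_walk_Nil_left by (auto simp: walk_word_def wstar_walk_word)
next
  case (Cons f fs)
  show ?case
  proof (cases fs')
    case Nil
    have "wcong s r (rev (map Gh (f # fs)) @ [V u, V u] @ []) (rev (map Gh (f # fs)) @ [V u] @ []) K"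
      by (intro wcong_context wcong_VV)
    moreover have "u \<noteq> u' \<Longrightarrow> wnull s r (rev (map Gh (f # fs)) @ [V u, V u'] @ []) K"
      by (intro wnull_context wnull_VV)
    ultimately show ?thesis
      using Nil unfolding ghost_walk_Nil_right by (auto simp: wstar_walk_word walk_word_def)
  next
    case (Cons f' fs1')
    note step = ghost_walk_step[of s f' u' u f r fs fs1' K]
    have "s f' = u'" "walk s r (r f) fs" "walk s r (r f') fs1'"
      using Cons.prems Cons by auto
    with Cons.IH[of "r f" "r f"] step show ?thesis
      using Cons by (auto intro: wcong_trans wcong_wnull)
  qed
qed

fun pq_ext :: "('v, 'e) pq \<Rightarrow> 'e list \<Rightarrow> ('v, 'e) pq" where
  "pq_ext (a, es, u, fs) \<gamma> = (a, es @ \<gamma>, u, fs @ \<gamma>)"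
fun pq_end :: "('e \<Rightarrow> 'v) \<Rightarrow> ('v, 'e) pq \<Rightarrow> 'v" where
  "pq_end r (a, es, u, fs) = walk_end r a es"
fun pq_qedges :: "('v, 'e) pq \<Rightarrow> 'e list" where
  "pq_qedges (a, es, u, fs) = fs"

lemma pq_ext_pq_ext[simp]: "pq_ext (pq_ext \<alpha> \<gamma>) \<delta> = pq_ext \<alpha> (\<gamma> @ \<delta>)"
  by (cases \<alpha>) auto
lemma pq_ext_Nil[simp]: "pq_ext \<alpha> [] = \<alpha>"
  by (cases \<alpha>) auto
lemma pq_ext_eq_iff: "pq_ext \<alpha> \<gamma> = pq_ext \<alpha> \<delta> \<longleftrightarrow> \<gamma> = \<delta>"
  by (cases \<alpha>) auto
lemma pq_ext_eq_self_iff: "\<alpha> = pq_ext \<alpha> \<gamma> \<longleftrightarrow> \<gamma> = []"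
  by (cases \<alpha>) auto

lemma pq_end_pq_ext: "pq_end r (pq_ext \<alpha> \<gamma>) = walk_end r (pq_end r \<alpha>) \<gamma>"
  by (cases \<alpha>) (simp add: walk_end_append)
lemma pq_qedges_pq_ext[simp]: "pq_qedges (pq_ext \<alpha> \<gamma>) = pq_qedges \<alpha> @ \<gamma>"
  by (cases \<alpha>) auto

lemma pq_word_mult_star_eq:
  "pq_word (a, es, u, fs) @ wstar (pq_word (a', es', u', fs'))
     = walk_word a es @ (wstar (walk_word u fs) @ walk_word u' fs') @ wstar (walk_word a' es')"
  by (simp add: pq_word.simps wstar_append)

lemma pq_word_mult_star_prefix:
  assumes "pq_ok s r (a, es, u, fs)" "pq_ok s r (a', es', u, fs @ \<gamma>)"
  shows "wcong s r (pq_word (a, es, u, fs) @ wstar (pq_word (a', es', u, fs @ \<gamma>)))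
           (pq_word (a, es @ \<gamma>, a', es')) K"
    and "pq_ok s r (a, es @ \<gamma>, a', es')"
proof -
  from assms have v: "walk s r a es" "walk s r u fs" "walk s r u (fs @ \<gamma>)"
    and e: "walk_end r a es = walk_end r u fs" "walk_end r a' es' = walk_end r u (fs @ \<gamma>)"
    and v': "walk s r a' es'"
    by (auto simp: pq_ok.simps)
  have "wcong s r (walk_word a es @ (wstar (walk_word u fs) @ walk_word u (fs @ \<gamma>)) @ wstar (walk_word a' es'))
      (walk_word a es @ walk_word (walk_end r a es) \<gamma> @ wstar (walk_word a' es')) K"
    using ghost_walk_product[OF v(2,3), of \<gamma> K] e(1) by (intro wcong_context) simp
  also have "wcong s r (walk_word a es @ walk_word (walk_end r a es) \<gamma> @ wstar (walk_word a' es'))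
      ([] @ walk_word a (es @ \<gamma>) @ wstar (walk_word a' es')) K"
    using wcong_context[OF walk_word_append[OF v(1)], where a="[]" and b="wstar (walk_word a' es')"]
    by simp
  finally show "wcong s r (pq_word (a, es, u, fs) @ wstar (pq_word (a', es', u, fs @ \<gamma>)))
      (pq_word (a, es @ \<gamma>, a', es')) K"
    by (simp add: pq_word.simps wstar_append)
  show "pq_ok s r (a, es @ \<gamma>, a', es')"
    using v v' e by (simp add: pq_ok.simps walk_append walk_end_append)
qed

lemma pq_word_mult_star_suffix:
  assumes "pq_ok s r (a, es, u, fs @ \<gamma>)" "pq_ok s r (a', es', u, fs)"
  shows "wcong s r (pq_word (a, es, u, fs @ \<gamma>) @ wstar (pq_word (a', es', u, fs)))
           (pq_word (a, es, a', es' @ \<gamma>)) K"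
    and "pq_ok s r (a, es, a', es' @ \<gamma>)"
proof -
  from assms have v: "walk s r u (fs @ \<gamma>)" "walk s r u fs"
    and e: "walk_end r a es = walk_end r u (fs @ \<gamma>)" "walk_end r a' es' = walk_end r u fs"
    and v': "walk s r a es" "walk s r a' es'"
    by (auto simp: pq_ok.simps)
  have "wcong s r (walk_word a es @ (wstar (walk_word u (fs @ \<gamma>)) @ walk_word u fs) @ wstar (walk_word a' es'))
      (walk_word a es @ wstar (walk_word (walk_end r a' es') \<gamma>) @ wstar (walk_word a' es')) K"
    using ghost_walk_product[OF v, of \<gamma> K] e(2) by (intro wcong_context) simp
  also have "wcong s r (walk_word a es @ wstar (walk_word (walk_end r a' es') \<gamma>) @ wstar (walk_word a' es'))
      (walk_word a es @ wstar (walk_word a' (es' @ \<gamma>)) @ []) K"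
    using wcong_context[OF wcong_wstar[OF walk_word_append[OF v'(2)]], where a="walk_word a es" and b="[]"]
    by (simp add: wstar_append)
  finally show "wcong s r (pq_word (a, es, u, fs @ \<gamma>) @ wstar (pq_word (a', es', u, fs)))
      (pq_word (a, es, a', es' @ \<gamma>)) K"
    by (simp add: pq_word.simps wstar_append)
  show "pq_ok s r (a, es, a', es' @ \<gamma>)"
    using v v' e by (simp add: pq_ok.simps walk_append walk_end_append)
qed

lemma pq_word_mult_star_null:
  assumes "pq_ok s r (a, es, u, fs)" "pq_ok s r (a', es', u', fs')"
    and "u \<noteq> u' \<or> (\<forall>\<gamma>. fs' \<noteq> fs @ \<gamma> \<and> fs \<noteq> fs' @ \<gamma>)"
  shows "wnull s r (pq_word (a, es, u, fs) @ wstar (pq_word (a', es', u', fs'))) K"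
proof -
  have "wnull s r (wstar (walk_word u fs) @ walk_word u' fs') K"
    using assms ghost_walk_product[of s r u fs u' fs' _ K] by (auto simp: pq_ok.simps)
  then show ?thesis unfolding pq_word_mult_star_eq by (rule wnull_context)
qed

lemma pq_ok_ext1: "pq_ok s r \<alpha> \<Longrightarrow> s f = pq_end r \<alpha> \<Longrightarrow> pq_ok s r (pq_ext \<alpha> [f])"
  by (cases \<alpha>) (auto simp: pq_ok.simps walk_append walk_end_append)

lemma pq_ok_ext: "pq_ok s r \<alpha> \<Longrightarrow> walk s r (pq_end r \<alpha>) \<gamma> \<Longrightarrow> pq_ok s r (pq_ext \<alpha> \<gamma>)"
  by (cases \<alpha>) (auto simp: pq_ok.simps walk_append walk_end_append)

lemma append_eq_append_suffix_le:
  assumes "a @ y = b @ L" "c @ y = d @ L" "length y \<le> length L"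
  shows "\<exists>\<nu>. a = b @ \<nu> \<and> c = d @ \<nu>"
proof -
  let ?\<nu> = "take (length L - length y) L"
  have la: "length a = length b + length L - length y" using arg_cong[OF assms(1), of length] by simp
  have lc: "length c = length d + length L - length y" using arg_cong[OF assms(2), of length] by simp
  have "a = take (length a) (a @ y)" by simp
  also have "\<dots> = take (length a) (b @ L)" using assms(1) by simp
  also have "\<dots> = b @ ?\<nu>" using la assms(3) by (simp add: take_append)
  finally have 1: "a = b @ ?\<nu>" .
  have "c = take (length c) (c @ y)" by simp
  also have "\<dots> = take (length c) (d @ L)" using assms(2) by simp
  also have "\<dots> = d @ ?\<nu>" using lc assms(3) by (simp add: take_append)
  finally have 2: "c = d @ ?\<nu>" .
  from 1 2 show ?thesis by blast
qed

definition pq_related :: "('v,'e) pq \<Rightarrow> ('v,'e) pq \<Rightarrow> bool" where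
  "pq_related \<alpha> \<beta> \<longleftrightarrow> (\<exists>\<gamma>. \<beta> = pq_ext \<alpha> \<gamma>) \<or> (\<exists>\<gamma>. \<alpha> = pq_ext \<beta> \<gamma>)"

lemma pq_related_of_pq_ext_eq:
  assumes "pq_ext \<beta> y = pq_ext (pq_ext \<alpha> x) \<mu>" shows "pq_related \<alpha> \<beta>"
proof -
  obtain a es u fs where al: "\<alpha> = (a, es, u, fs)" by (cases \<alpha>) auto
  obtain a' es' u' fs' where be: "\<beta> = (a', es', u', fs')" by (cases \<beta>) auto
  from assms al be have e1: "es' @ y = es @ (x @ \<mu>)" and e2: "fs' @ y = fs @ (x @ \<mu>)"
    and aa: "a' = a" "u' = u" by auto
  show ?thesis
  proof (cases "length y \<le> length (x @ \<mu>)")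
    case True
    from append_eq_append_suffix_le[OF e1 e2 True] obtain \<nu> where "es' = es @ \<nu>" "fs' = fs @ \<nu>" by blast
    then have "\<beta> = pq_ext \<alpha> \<nu>" using al be aa by simp
    then show ?thesis by (auto simp: pq_related_def)
  next
    case False
    from append_eq_append_suffix_le[OF e1[symmetric] e2[symmetric]] False
    obtain \<nu> where "es = es' @ \<nu>" "fs = fs' @ \<nu>" by force
    then have "\<alpha> = pq_ext \<beta> \<nu>" using al be aa by simp
    then show ?thesis by (auto simp: pq_related_def)
  qed
qed

lemma pq_related_pq_ext: "pq_related (pq_ext \<alpha> x) (pq_ext \<beta> y) \<Longrightarrow> pq_related \<alpha> \<beta>"
  unfolding pq_related_def
  by (metis pq_related_def pq_related_of_pq_ext_eq)

lemma pq_related_pq_ext_right: "pq_related \<alpha> (pq_ext \<beta> y) \<Longrightarrow> pq_related \<alpha> \<beta>"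
  using pq_related_pq_ext[of \<alpha> "[]" \<beta> y] by simp
lemma pq_related_pq_ext_left: "pq_related (pq_ext \<alpha> x) \<beta> \<Longrightarrow> pq_related \<alpha> \<beta>"
  using pq_related_pq_ext[of \<alpha> x \<beta> "[]"] by simp

section \<open>Positive elements of an involutive algebra\<close>

locale positive_definite_algebra = field_inv ks for ks :: "'k::field \<Rightarrow> 'k" +
  fixes sc :: "'k \<Rightarrow> 'r::ring \<Rightarrow> 'r" and rs :: "'r \<Rightarrow> 'r"
  assumes ia: "involutive_algebra ks sc rs" and pd: "positive_definite rs"
begin

lemma involutive_algebra_laws:
  "sc a (x + y) = sc a x + sc a y" "sc (a + b) x = sc a x + sc b x" "sc (a * b) x = sc a (sc b x)"
  "sc 1 x = x" "sc a (x * y) = sc a x * y" "sc a (x * y) = x * sc a y"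
  "rs (x + y) = rs x + rs y" "rs (x * y) = rs y * rs x" "rs (rs x) = x" "rs (sc a x) = sc (ks a) (rs x)"
  using ia unfolding involutive_algebra_def
  apply -
  apply (elim conjE; fast)+
  done

lemma sc_zero[simp]: "sc a 0 = 0" using involutive_algebra_laws(1)[of a 0 0] by simp

lemma nonneg_0[simp]: "nonneg rs 0"
  unfolding nonneg_def by (rule exI[of _ "[]"]) simp

lemma nonneg_add: "nonneg rs x \<Longrightarrow> nonneg rs y \<Longrightarrow> nonneg rs (x + y)"
  unfolding nonneg_def by (metis map_append sum_list_append)

lemma nonneg_sum: "(\<And>a. a \<in> A \<Longrightarrow> nonneg rs (f a)) \<Longrightarrow> nonneg rs (sum f A)"
  by (induction A rule: infinite_finite_induct) (auto intro: nonneg_add)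

lemma nonneg_sum_list: "(\<And>x. x \<in> set xs \<Longrightarrow> nonneg rs (f x)) \<Longrightarrow> nonneg rs (\<Sum>x\<leftarrow>xs. f x)"
  by (induction xs) (auto intro: nonneg_add)

lemma sc_sum_list: "sc a (\<Sum>x\<leftarrow>xs. f x) = (\<Sum>x\<leftarrow>xs. sc a (f x))"
  by (induction xs) (auto simp: involutive_algebra_laws(1))

lemma sc_norm_square: "sc (a * ks a) (z * rs z) = sc a z * rs (sc a z)"
proof -
  have "sc (a * ks a) (z * rs z) = sc a (sc (ks a) (z * rs z))" by (rule involutive_algebra_laws(3))
  also have "sc (ks a) (z * rs z) = z * sc (ks a) (rs z)" by (rule involutive_algebra_laws(6))
  also have "sc a (z * sc (ks a) (rs z)) = sc a z * sc (ks a) (rs z)" by (rule involutive_algebra_laws(5))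
  also have "sc (ks a) (rs z) = rs (sc a z)" by (rule involutive_algebra_laws(10)[symmetric])
  finally show ?thesis .
qed

lemma sum_squares_zero: "(\<forall>z\<in>set xs. z = 0) \<Longrightarrow> (\<Sum>z\<leftarrow>xs. z * rs z) = 0"
  by (induction xs) auto

lemma sum_squares_eq_0D: "(\<Sum>z\<leftarrow>xs. z * rs z) = 0 \<Longrightarrow> z \<in> set xs \<Longrightarrow> z = 0"
  using pd unfolding positive_definite_def by blast

lemma nonneg_sc_norm: "nonneg rs x \<Longrightarrow> nonneg rs (sc (a * ks a) x)"
proof -
  assume "nonneg rs x"
  then obtain zs where x: "x = (\<Sum>z\<leftarrow>zs. z * rs z)" by (auto simp: nonneg_def)
  have "sc (a * ks a) x = (\<Sum>z\<leftarrow>map (sc a) zs. z * rs z)"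
    unfolding x sc_sum_list by (simp add: sc_norm_square comp_def)
  then show ?thesis unfolding nonneg_def by blast
qed

lemma nonneg_add_eq_0D: "nonneg rs x \<Longrightarrow> nonneg rs y \<Longrightarrow> x + y = 0 \<Longrightarrow> x = 0"
proof -
  assume "nonneg rs x" "nonneg rs y" "x + y = 0"
  then obtain xs ys where x: "x = (\<Sum>z\<leftarrow>xs. z * rs z)" and y: "y = (\<Sum>z\<leftarrow>ys. z * rs z)"
    by (auto simp: nonneg_def)
  have "(\<Sum>z\<leftarrow>xs @ ys. z * rs z) = 0" using \<open>x + y = 0\<close> x y by simp
  then have "\<forall>z\<in>set xs. z = 0" using sum_squares_eq_0D[OF \<open>(\<Sum>z\<leftarrow>xs @ ys. z * rs z) = 0\<close>] by simp
  then show "x = 0" unfolding x by (rule sum_squares_zero)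
qed

lemma nonneg_sum_eq_0D: "finite A \<Longrightarrow> (\<And>a. a \<in> A \<Longrightarrow> nonneg rs (f a)) \<Longrightarrow> sum f A = 0 \<Longrightarrow> a \<in> A \<Longrightarrow> f a = 0"
proof (induction A rule: finite_induct)
  case empty then show ?case by simp
next
  case (insert x F)
  have nF: "nonneg rs (sum f F)" using insert by (intro nonneg_sum) auto
  have fx: "f x = 0" using nonneg_add_eq_0D[of "f x" "sum f F"] insert nF by auto
  then have "sum f F = 0" using insert by simp
  then show ?case using insert fx by auto
qed

lemma nonneg_sum_list_eq_0D: "(\<And>x. x \<in> set xs \<Longrightarrow> nonneg rs (f x)) \<Longrightarrow> (\<Sum>x\<leftarrow>xs. f x) = 0 \<Longrightarrow> x \<in> set xs \<Longrightarrow> f x = 0"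
proof (induction xs)
  case Nil then show ?case by simp
next
  case (Cons y ys)
  have nF: "nonneg rs (\<Sum>x\<leftarrow>ys. f x)" using Cons by (intro nonneg_sum_list) auto
  have fy: "f y = 0" using nonneg_add_eq_0D[of "f y" "\<Sum>x\<leftarrow>ys. f x"] Cons nF by auto
  then show ?case using Cons by auto
qed

lemma positive_sc_norm_eq_0D: assumes "positive rs x" "sc (a * ks a) x = 0" shows "a = 0"
proof (rule ccontr)
  assume a: "a \<noteq> 0"
  from assms(1) obtain zs where x: "x = (\<Sum>z\<leftarrow>zs. z * rs z)" and nz: "x \<noteq> 0"
    by (auto simp: positive_def nonneg_def)
  have "(\<Sum>z\<leftarrow>map (sc a) zs. z * rs z) = 0"
    using assms(2) unfolding x sc_sum_list by (simp add: sc_norm_square comp_def)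
  then have "\<forall>z\<in>set zs. sc a z = 0" using sum_squares_eq_0D by (metis imageI set_map)
  then have "\<forall>z\<in>set zs. z = 0"
    using a by (metis involutive_algebra_laws(3,4) right_inverse sc_zero mult.commute)
  then have "x = 0" unfolding x by (induction zs) auto
  with nz show False by simp
qed

end

section \<open>Canonical traces\<close>

locale lpa_canonical_trace = positive_definite_algebra ks sc rs
  for ks :: "'k::field \<Rightarrow> 'k" and sc :: "'k \<Rightarrow> 'r::ring \<Rightarrow> 'r" and rs :: "'r \<Rightarrow> 'r" +
  fixes s r :: "'e \<Rightarrow> 'v" and t :: "(('v, 'e) gen list \<Rightarrow> 'k) \<Rightarrow> 'r"
  assumes tr: "lpa_trace s r t" and lin: "K_linear_trace sc t" and can: "canonical_trace s r ks t"
begin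

lemma t_add: "x \<in> Fset \<Longrightarrow> y \<in> Fset \<Longrightarrow> t (fadd x y) = t x + t y"
  using tr by (simp add: lpa_trace_def)
lemma t_lpa_cong: "x \<in> Fset \<Longrightarrow> y \<in> Fset \<Longrightarrow> lpa_cong s r x y \<Longrightarrow> t x = t y"
  using tr by (simp add: lpa_trace_def lpa_cong_def)
lemma t_scal: "x \<in> Fset \<Longrightarrow> t (fscal a x) = sc a (t x)"
  using lin by (simp add: K_linear_trace_def)
lemma t_zero[simp]: "t fzero = 0"
  using t_add[of fzero fzero] by (simp add: fadd_fzero)
lemma t_sub: "x \<in> Fset \<Longrightarrow> y \<in> Fset \<Longrightarrow> t (fsub x y) = t x - t y"
proof -
  assume xy: "x \<in> Fset" "y \<in> Fset"
  have "fadd (fsub x y) y = x" by (rule ext) (simp add: fadd_def fsub_def)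
  then have "t x = t (fsub x y) + t y" using t_add[OF Fset_sub[OF xy] xy(2)] by simp
  then show ?thesis by (simp add: algebra_simps)
qed

lemma t_sum: "finite A \<Longrightarrow> (\<And>a. a \<in> A \<Longrightarrow> g a \<in> Fset) \<Longrightarrow> t (fsum g A) = (\<Sum>a\<in>A. t (g a))"
proof (induction A rule: finite_induct)
  case empty then show ?case by simp
next
  case (insert x F)
  then show ?case by (simp add: fsum_insert t_add Fset_fsum)
qed

lemma t_fsum_list: "set xs \<subseteq> Fset \<Longrightarrow> t (fsum_list xs) = (\<Sum>x\<leftarrow>xs. t x)"
  by (induction xs) (auto simp: t_add Fset_fsum_list)

lemma t_ideal: "x \<in> lpa_ideal s r \<Longrightarrow> t x = 0"
  using t_lpa_cong[of x fzero] by (simp add: lpa_ideal_Fset lpa_cong_fzero_iff)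

lemma t_wcong: "u \<noteq> [] \<Longrightarrow> v \<noteq> [] \<Longrightarrow> wcong s r u v TYPE('k) \<Longrightarrow> t (mon u) = t (mon v)"
  by (rule t_lpa_cong) (auto simp: Fset_mon wcong_def)

lemma t_wnull: "wnull s r u TYPE('k) \<Longrightarrow> t (mon u) = 0"
  by (simp add: wnull_def t_ideal)

definition vtrace :: "'v \<Rightarrow> 'r" where "vtrace w = t (mon [V w])"

lemma t_vertex_minus_ranges: "finite I \<Longrightarrow> t (fsub (mon [V v]) (fsum (\<lambda>e. mon [V (r e)]) I)) = vtrace v - (\<Sum>e\<in>I. vtrace (r e))"
  by (simp add: t_sub Fset_mon Fset_fsum t_sum vtrace_def)

lemma t_pq_word: assumes "pq_ok s r (a, es, u, fs)"
  shows "t (mon (pq_word (a, es, u, fs))) = (if a = u \<and> es = fs then vtrace (walk_end r a es) else 0)"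
proof -
  from assms have v1: "walk s r a es" and v2: "walk s r u fs" and en: "walk_end r a es = walk_end r u fs"
    by (auto simp: pq_ok.simps)
  let ?p = "walk_path a es" and ?q = "walk_path u fs"
  have "wcong s r (pq_word (a, es, u, fs)) (path_word ?p @ rev (map Gh fs) @ [V u]) TYPE('k)"
    unfolding pq_word_eq using walk_word_path_word[OF v1, where K="TYPE('k)"] by simp
  also have "wcong s r (path_word ?p @ rev (map Gh fs) @ [V u]) (path_word ?p @ wstar (path_word ?q)) TYPE('k)"
    using wstar_walk_word_path_word[OF v2, where K="TYPE('k)"] by simp
  finally have w: "wcong s r (pq_word (a, es, u, fs)) (path_word ?p @ wstar (path_word ?q)) TYPE('k)" .
  have ne: "path_word ?p @ wstar (path_word ?q) \<noteq> []" by (simp add: walk_path_def)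
  have "t (mon (pq_word (a, es, u, fs))) = t (mon (path_word ?p @ wstar (path_word ?q)))"
    by (rule t_wcong[OF _ ne w]) (simp add: pq_word_eq)
  also have "\<dots> = t (fmul (mon (path_word ?p)) (fstar ks (mon (path_word ?q))))"
    by (simp add: fmul_mon_mon)
  also have "\<dots> = (if ?p = ?q then t (mon [V (path_range r ?p)]) else 0)"
    using can walk_valid_path[OF v1] walk_valid_path[OF v2] en unfolding canonical_trace_def
    by (simp add: path_range_walk_path)
  finally show ?thesis using walk_path_eq_iff[OF v1 v2] by (simp add: path_range_walk_path vtrace_def)
qed

definition pq_gram :: "('v, 'e) pq \<Rightarrow> ('v, 'e) pq \<Rightarrow> 'r" where
  "pq_gram \<alpha> \<beta> = (if \<exists>\<gamma>. \<beta> = pq_ext \<alpha> \<gamma> then vtrace (pq_end r \<beta>) else if \<exists>\<gamma>. \<alpha> = pq_ext \<beta> \<gamma> then vtrace (pq_end r \<alpha>) else 0)"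

lemma pq_gram_unrelated: "\<not> pq_related \<alpha> \<beta> \<Longrightarrow> pq_gram \<alpha> \<beta> = 0"
  by (simp add: pq_gram_def pq_related_def)

lemma pq_gram_pq_ext: "pq_gram (pq_ext \<alpha> x) (pq_ext \<alpha> y) =
   (if \<exists>\<mu>. y = x @ \<mu> then vtrace (walk_end r (pq_end r \<alpha>) y) else if \<exists>\<mu>. x = y @ \<mu> then vtrace (walk_end r (pq_end r \<alpha>) x) else 0)"
  unfolding pq_gram_def by (simp add: pq_ext_eq_iff pq_end_pq_ext)

lemma pq_gram_prefix:
  "pq_gram (a, es, u, fs) (a', es', u, fs @ \<gamma>) = (if a = a' \<and> es @ \<gamma> = es' then vtrace (walk_end r a es') else 0)"
  by (auto simp: pq_gram_def)

lemma pq_gram_suffix: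
  "pq_gram (a, es, u, fs @ \<gamma>) (a', es', u, fs) = (if a = a' \<and> es = es' @ \<gamma> then vtrace (walk_end r a es) else 0)"
  by (auto simp: pq_gram_def)

lemma t_pq_word_mult_star:
  assumes "pq_ok s r \<alpha>" "pq_ok s r \<beta>"
  shows "t (mon (pq_word \<alpha> @ wstar (pq_word \<beta>))) = pq_gram \<alpha> \<beta>"
proof -
  obtain a es u fs a' es' u' fs' where al: "\<alpha> = (a, es, u, fs)" and be: "\<beta> = (a', es', u', fs')"
    by (cases \<alpha>; cases \<beta>) auto
  consider (prefix) \<gamma> where "u' = u" "fs' = fs @ \<gamma>" | (suffix) \<gamma> where "u' = u" "fs = fs' @ \<gamma>"
    | (null) "u \<noteq> u' \<or> (\<forall>\<gamma>. fs' \<noteq> fs @ \<gamma> \<and> fs \<noteq> fs' @ \<gamma>)"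
    by blast
  then show ?thesis
  proof cases
    case (prefix \<gamma>)
    note w = pq_word_mult_star_prefix(1)[of s r a es u fs a' es' \<gamma> "TYPE('k)"]
      pq_word_mult_star_prefix(2)[of s r a es u fs a' es' \<gamma>]
    have "t (mon (pq_word \<alpha> @ wstar (pq_word \<beta>))) = t (mon (pq_word (a, es @ \<gamma>, a', es')))"
      using assms al be prefix w by (intro t_wcong) simp_all
    then show ?thesis using assms al be prefix w by (simp add: t_pq_word pq_gram_prefix)
  next
    case (suffix \<gamma>)
    note w = pq_word_mult_star_suffix(1)[of s r a es u fs' \<gamma> a' es' "TYPE('k)"]
      pq_word_mult_star_suffix(2)[of s r a es u fs' \<gamma> a' es']
    have "t (mon (pq_word \<alpha> @ wstar (pq_word \<beta>))) = t (mon (pq_word (a, es, a', es' @ \<gamma>)))"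
      using assms al be suffix w by (intro t_wcong) simp_all
    then show ?thesis using assms al be suffix w by (simp add: t_pq_word pq_gram_suffix)
  next
    case null
    then have "\<not> pq_related \<alpha> \<beta>" using al be by (auto simp: pq_related_def)
    then show ?thesis
      using assms al be null pq_word_mult_star_null t_wnull pq_gram_unrelated by metis
  qed
qed

section \<open>Orthogonal defects\<close>

definition wtrace :: "('v,'e) gen list \<Rightarrow> ('v,'e) gen list \<Rightarrow> 'r" where
  "wtrace u v = t (mon (u @ wstar v))"

lemma t_mult_star_diff:
  assumes "finite I" "finite J" "u \<noteq> []" "v \<noteq> []" "\<And>i. i \<in> I \<Longrightarrow> p i \<noteq> []" "\<And>j. j \<in> J \<Longrightarrow> q j \<noteq> []"
  shows "t (fmul (fsub (mon u) (fsum (\<lambda>i. mon (p i)) I)) (fstar ks (fsub (mon v) (fsum (\<lambda>j. mon (q j)) J))))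
       = wtrace u v - (\<Sum>j\<in>J. wtrace u (q j)) - (\<Sum>i\<in>I. wtrace (p i) v) + (\<Sum>i\<in>I. \<Sum>j\<in>J. wtrace (p i) (q j))"
proof -
  have mon_Fset: "mon (x @ wstar y) \<in> Fset" if "x \<noteq> []" for x y :: "('v,'e) gen list"
    using that by (simp add: Fset_mon)
  have sums_Fset: "fsum (\<lambda>j. mon (u @ wstar (q j))) J \<in> Fset" "fsum (\<lambda>i. mon (p i @ wstar v)) I \<in> Fset"
    "fsum (\<lambda>i. fsum (\<lambda>j. mon (p i @ wstar (q j))) J) I \<in> Fset"
    using assms by (auto intro!: Fset_fsum mon_Fset)
  have expand: "fmul (fsub (mon u) (fsum (\<lambda>i. mon (p i)) I)) (fstar ks (fsub (mon v) (fsum (\<lambda>j. mon (q j)) J)))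
     = fsub (fsub (mon (u @ wstar v)) (fsum (\<lambda>j. mon (u @ wstar (q j))) J))
            (fsub (fsum (\<lambda>i. mon (p i @ wstar v)) I) (fsum (\<lambda>i. fsum (\<lambda>j. mon (p i @ wstar (q j))) J) I))"
    apply (simp add: fstar_sub fstar_sum fmul_sub_left fmul_sub_right fmul_sum_left fmul_sum_right fmul_mon_mon)
    apply (rule ext)
    apply (simp add: fsub_def fsum_def sum_subtractf algebra_simps)
    apply (subst sum.swap[of _ J I])
    apply simp
    done
  show ?thesis
    unfolding expand using assms sums_Fset
    by (simp add: t_sub Fset_sub Fset_mon t_sum Fset_fsum mon_Fset wtrace_def)
qed

definition edges_in :: "'e set \<Rightarrow> 'v \<Rightarrow> 'e set" where "edges_in F w = {f \<in> F. s f = w}"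

definition next_edges :: "nat \<Rightarrow> 'e set \<Rightarrow> ('v,'e) pq \<Rightarrow> 'e set" where
  "next_edges n F \<alpha> = (if length (pq_qedges \<alpha>) = n then {} else edges_in F (pq_end r \<alpha>))"

text \<open>defect n F (p, q) is the element X(p, q) of the proof sketch at the top.\<close>

definition defect :: "nat \<Rightarrow> 'e set \<Rightarrow> ('v,'e) pq \<Rightarrow> ('v, 'e) gen list \<Rightarrow> 'k" where
  "defect n F \<alpha> = fsub (mon (pq_word \<alpha>)) (fsum (\<lambda>f. mon (pq_word (pq_ext \<alpha> [f]))) (next_edges n F \<alpha>))"

definition defect_norm :: "nat \<Rightarrow> 'e set \<Rightarrow> ('v,'e) pq \<Rightarrow> 'r" where
  "defect_norm n F \<alpha> = vtrace (pq_end r \<alpha>) - (\<Sum>f\<in>next_edges n F \<alpha>. vtrace (r f))"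

definition admissible :: "nat \<Rightarrow> 'e set \<Rightarrow> ('v,'e) pq \<Rightarrow> bool" where
  "admissible n F \<alpha> \<longleftrightarrow> pq_ok s r \<alpha> \<and> set (pq_qedges \<alpha>) \<subseteq> F \<and> length (pq_qedges \<alpha>) \<le> n"

lemma finite_next_edges: "finite F \<Longrightarrow> finite (next_edges n F \<alpha>)"
  by (simp add: next_edges_def edges_in_def)

lemma next_edges_src: "f \<in> next_edges n F \<alpha> \<Longrightarrow> s f = pq_end r \<alpha>"
  by (simp add: next_edges_def edges_in_def split: if_splits)

lemma Fset_defect: "finite F \<Longrightarrow> defect n F \<alpha> \<in> Fset"
  unfolding defect_def by (intro Fset_sub Fset_mon Fset_fsum) (auto simp: finite_next_edges)

lemma t_defect_mult_star: assumes "finite F" "pq_ok s r \<alpha>" "pq_ok s r \<beta>"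
  shows "t (fmul (defect n F \<alpha>) (fstar ks (defect n F \<beta>))) =
    pq_gram \<alpha> \<beta> - (\<Sum>g\<in>next_edges n F \<beta>. pq_gram \<alpha> (pq_ext \<beta> [g])) - (\<Sum>f\<in>next_edges n F \<alpha>. pq_gram (pq_ext \<alpha> [f]) \<beta>)
      + (\<Sum>f\<in>next_edges n F \<alpha>. \<Sum>g\<in>next_edges n F \<beta>. pq_gram (pq_ext \<alpha> [f]) (pq_ext \<beta> [g]))"
  unfolding defect_def
  apply (subst t_mult_star_diff)
  using assms apply (simp_all add: finite_next_edges)
  using assms by (simp add: wtrace_def t_pq_word_mult_star pq_ok_ext1 next_edges_src)

lemma pq_gram_sym: "pq_gram \<alpha> \<beta> = pq_gram \<beta> \<alpha>"
  by (auto simp: pq_gram_def pq_ext_eq_self_iff)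

lemma t_defect_mult_star_sym:
  assumes "finite F" "pq_ok s r \<alpha>" "pq_ok s r \<beta>"
  shows "t (fmul (defect n F \<alpha>) (fstar ks (defect n F \<beta>))) = t (fmul (defect n F \<beta>) (fstar ks (defect n F \<alpha>)))"
  using assms by (simp add: t_defect_mult_star pq_gram_sym[of \<alpha>] pq_gram_sym[of "pq_ext \<alpha> [_]"]
      sum.swap[of _ "next_edges n F \<alpha>"] del: pq_ext_pq_ext)

lemma t_defect_mult_star_self: assumes "finite F" "pq_ok s r \<alpha>"
  shows "t (fmul (defect n F \<alpha>) (fstar ks (defect n F \<alpha>))) = defect_norm n F \<alpha>"
proof -
  let ?E = "next_edges n F \<alpha>"
  have fE: "finite ?E" using assms by (simp add: finite_next_edges)
  have "pq_gram \<alpha> \<alpha> = vtrace (pq_end r \<alpha>)" using pq_gram_pq_ext[of \<alpha> "[]" "[]"] by simp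
  moreover have "\<And>g. pq_gram \<alpha> (pq_ext \<alpha> [g]) = vtrace (r g)" using pq_gram_pq_ext[of \<alpha> "[]"] by simp
  moreover have "\<And>f. pq_gram (pq_ext \<alpha> [f]) \<alpha> = vtrace (r f)" using pq_gram_pq_ext[of \<alpha> _ "[]"] by simp
  moreover have "\<And>f g. pq_gram (pq_ext \<alpha> [f]) (pq_ext \<alpha> [g]) = (if g = f then vtrace (r f) else 0)"
    by (simp add: pq_gram_pq_ext)
  ultimately show ?thesis
    using assms fE by (simp add: t_defect_mult_star sum.delta' defect_norm_def)
qed

lemma t_defect_mult_star_pq_ext:
  assumes "finite F" "admissible n F \<alpha>" "admissible n F (pq_ext \<alpha> (g0 # \<gamma>))"
  shows "t (fmul (defect n F \<alpha>) (fstar ks (defect n F (pq_ext \<alpha> (g0 # \<gamma>))))) = 0"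
proof -
  let ?\<beta> = "pq_ext \<alpha> (g0 # \<gamma>)"
  let ?E = "next_edges n F \<alpha>" and ?E' = "next_edges n F ?\<beta>"
  have fE: "finite ?E" "finite ?E'" using assms by (simp_all add: finite_next_edges)
  have "g0 \<in> ?E"
    using assms(2,3) by (cases \<alpha>) (auto simp: admissible_def pq_ok.simps walk_append next_edges_def edges_in_def)
  moreover have "pq_gram \<alpha> ?\<beta> = vtrace (pq_end r ?\<beta>)"
    using pq_gram_pq_ext[of \<alpha> "[]" "g0 # \<gamma>"] by (simp add: pq_end_pq_ext)
  moreover have "\<And>g. pq_gram \<alpha> (pq_ext ?\<beta> [g]) = vtrace (r g)"
    using pq_gram_pq_ext[of \<alpha> "[]"] by (simp add: pq_end_pq_ext)
  moreover have "\<And>f. pq_gram (pq_ext \<alpha> [f]) ?\<beta> = (if f = g0 then vtrace (pq_end r ?\<beta>) else 0)"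
    using pq_gram_pq_ext[of \<alpha> _ "g0 # \<gamma>"] by (auto simp: pq_end_pq_ext)
  moreover have "\<And>f. (\<Sum>g\<in>?E'. pq_gram (pq_ext \<alpha> [f]) (pq_ext ?\<beta> [g]))
      = (if f = g0 then \<Sum>g\<in>?E'. vtrace (r g) else 0)"
    using pq_gram_pq_ext[of \<alpha>] by (auto simp: pq_end_pq_ext)
  ultimately show ?thesis
    using assms fE by (simp add: t_defect_mult_star admissible_def sum.delta' del: pq_ext_pq_ext)
qed

lemma t_defect_mult_star_unrelated: assumes "finite F" "pq_ok s r \<alpha>" "pq_ok s r \<beta>" "\<not> pq_related \<alpha> \<beta>"
  shows "t (fmul (defect n F \<alpha>) (fstar ks (defect n F \<beta>))) = 0"
proof -
  have "pq_gram \<alpha> \<beta> = 0" "\<And>g. pq_gram \<alpha> (pq_ext \<beta> [g]) = 0" "\<And>f. pq_gram (pq_ext \<alpha> [f]) \<beta> = 0"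
    "\<And>f g. pq_gram (pq_ext \<alpha> [f]) (pq_ext \<beta> [g]) = 0"
    using assms(4) by (auto intro!: pq_gram_unrelated dest: pq_related_pq_ext pq_related_pq_ext_left pq_related_pq_ext_right)
  then show ?thesis using assms by (simp add: t_defect_mult_star del: pq_ext_pq_ext)
qed

lemma t_defect_mult_star_eq: assumes "finite F" "admissible n F \<alpha>" "admissible n F \<beta>"
  shows "t (fmul (defect n F \<alpha>) (fstar ks (defect n F \<beta>))) = (if \<alpha> = \<beta> then defect_norm n F \<alpha> else 0)"
proof (cases "\<alpha> = \<beta>")
  case True then show ?thesis using t_defect_mult_star_self assms by (simp add: admissible_def)
next
  case False
  show ?thesis
  proof (cases "pq_related \<alpha> \<beta>")
    case True
    then consider \<gamma> where "\<beta> = pq_ext \<alpha> \<gamma>" | \<gamma> where "\<alpha> = pq_ext \<beta> \<gamma>" by (auto simp: pq_related_def)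
    then show ?thesis
    proof cases
      case (1 \<gamma>)
      with False obtain g0 \<gamma>' where "\<gamma> = g0 # \<gamma>'" by (cases \<gamma>) auto
      then show ?thesis using t_defect_mult_star_pq_ext[of F n \<alpha> g0 \<gamma>'] assms 1 False by simp
    next
      case (2 \<gamma>)
      with False obtain f0 \<gamma>' where "\<gamma> = f0 # \<gamma>'" by (cases \<gamma>) auto
      then show ?thesis
        using t_defect_mult_star_pq_ext[of F n \<beta> f0 \<gamma>'] t_defect_mult_star_sym assms 2 False
        by (simp add: admissible_def)
    qed
  next
    case False
    then show ?thesis using t_defect_mult_star_unrelated assms \<open>\<alpha> \<noteq> \<beta>\<close> by (simp add: admissible_def)
  qed
qed

lemma t_hermitian_square_defects:
  assumes "finite F" "finite D" "\<And>d. d \<in> D \<Longrightarrow> admissible n F d"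
  shows "t (fmul (fsum (\<lambda>d. fscal (c d) (defect n F d)) D) (fstar ks (fsum (\<lambda>d. fscal (c d) (defect n F d)) D)))
       = (\<Sum>d\<in>D. sc (c d * ks (c d)) (defect_norm n F d))"
proof -
  have expand: "fmul (fsum (\<lambda>d. fscal (c d) (defect n F d)) D) (fstar ks (fsum (\<lambda>d. fscal (c d) (defect n F d)) D))
     = fsum (\<lambda>d. fsum (\<lambda>d'. fscal (c d) (fscal (ks (c d')) (fmul (defect n F d) (fstar ks (defect n F d'))))) D) D"
    apply (simp add: fstar_sum fstar_scal fmul_sum_left fmul_sum_right fmul_scal_left fmul_scal_right)
    apply (rule ext)
    apply (simp add: fsum_def fscal_def sum_distrib_left algebra_simps)
    apply (rule sum.swap)
    done
  have products_Fset: "fmul (defect n F d) (fstar ks (defect n F d')) \<in> Fset" for d d'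
    using assms(1) by (intro Fset_mul Fset_defect Fset_fstar)
  have "t (fsum (\<lambda>d. fsum (\<lambda>d'. fscal (c d) (fscal (ks (c d')) (fmul (defect n F d) (fstar ks (defect n F d'))))) D) D)
      = (\<Sum>d\<in>D. \<Sum>d'\<in>D. sc (c d) (sc (ks (c d')) (t (fmul (defect n F d) (fstar ks (defect n F d'))))))"
    using assms(2) by (simp add: t_sum Fset_fsum Fset_scal products_Fset t_scal)
  also have "\<dots> = (\<Sum>d\<in>D. \<Sum>d'\<in>D. if d' = d then sc (c d) (sc (ks (c d)) (defect_norm n F d)) else 0)"
    using assms by (intro sum.cong refl) (auto simp: t_defect_mult_star_eq)
  also have "\<dots> = (\<Sum>d\<in>D. sc (c d * ks (c d)) (defect_norm n F d))"
    using assms(2) by (simp add: involutive_algebra_laws(3))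
  finally show ?thesis unfolding expand .
qed

definition extensions :: "nat \<Rightarrow> 'e set \<Rightarrow> ('v,'e) pq \<Rightarrow> 'e list set" where
  "extensions n F \<alpha> = {\<gamma>. set \<gamma> \<subseteq> F \<and> walk s r (pq_end r \<alpha>) \<gamma> \<and> length (pq_qedges \<alpha>) + length \<gamma> \<le> n}"

lemma finite_extensions: "finite F \<Longrightarrow> finite (extensions n F \<alpha>)"
  by (rule finite_subset[OF _ finite_lists_length_le[of F n]]) (auto simp: extensions_def)

lemma extensions_split: assumes "length (pq_qedges \<alpha>) < n"
  shows "extensions n F \<alpha> = insert [] ((\<lambda>(f, \<gamma>). f # \<gamma>) ` (SIGMA f:next_edges n F \<alpha>. extensions n F (pq_ext \<alpha> [f])))"
  using assms
proof (intro set_eqI iffI)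
  fix \<gamma> assume "\<gamma> \<in> extensions n F \<alpha>"
  with assms show "\<gamma> \<in> insert [] ((\<lambda>(f, \<gamma>). f # \<gamma>) ` (SIGMA f:next_edges n F \<alpha>. extensions n F (pq_ext \<alpha> [f])))"
    by (cases \<gamma>) (auto simp: extensions_def next_edges_def edges_in_def pq_end_pq_ext image_iff)
qed (auto simp: extensions_def next_edges_def edges_in_def pq_end_pq_ext)

lemma fsum_extensions_step:
  assumes "finite F" "length (pq_qedges \<alpha>) < n"
  shows "fsum (\<lambda>\<gamma>. X (pq_ext \<alpha> \<gamma>)) (extensions n F \<alpha>)
    = fadd (X \<alpha>) (fsum (\<lambda>f. fsum (\<lambda>\<gamma>. X (pq_ext \<alpha> (f # \<gamma>))) (extensions n F (pq_ext \<alpha> [f]))) (next_edges n F \<alpha>))"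
proof -
  let ?\<Sigma> = "SIGMA f:next_edges n F \<alpha>. extensions n F (pq_ext \<alpha> [f])"
  have fin: "finite ?\<Sigma>" using assms(1) by (simp add: finite_next_edges finite_extensions)
  have inj: "inj_on (\<lambda>(f, \<gamma>). f # \<gamma>) ?\<Sigma>" by (auto simp: inj_on_def)
  have "fsum (\<lambda>\<gamma>. X (pq_ext \<alpha> \<gamma>)) (extensions n F \<alpha>)
      = fadd (X \<alpha>) (fsum (\<lambda>\<gamma>. X (pq_ext \<alpha> \<gamma>)) ((\<lambda>(f, \<gamma>). f # \<gamma>) ` ?\<Sigma>))"
    using fin by (simp add: extensions_split[OF assms(2)] fsum_insert image_iff)
  also have "\<dots> = fadd (X \<alpha>) (fsum (\<lambda>(f, \<gamma>). X (pq_ext \<alpha> (f # \<gamma>))) ?\<Sigma>)"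
    by (subst fsum_reindex[OF inj]) (simp add: case_prod_unfold)
  also have "\<dots> = fadd (X \<alpha>) (fsum (\<lambda>f. fsum (\<lambda>\<gamma>. X (pq_ext \<alpha> (f # \<gamma>))) (extensions n F (pq_ext \<alpha> [f]))) (next_edges n F \<alpha>))"
    using assms(1) by (simp add: fsum_Sigma finite_next_edges finite_extensions)
  finally show ?thesis .
qed

lemma mon_pq_word_expansion:
  assumes "finite F" "pq_ok s r \<alpha>" "set (pq_qedges \<alpha>) \<subseteq> F" "length (pq_qedges \<alpha>) \<le> n"
  shows "mon (pq_word \<alpha>) = fsum (\<lambda>\<gamma>. defect n F (pq_ext \<alpha> \<gamma>)) (extensions n F \<alpha>)"
  using assms(2-)
proof (induction "n - length (pq_qedges \<alpha>)" arbitrary: \<alpha>)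
  case 0
  then have l: "length (pq_qedges \<alpha>) = n" by simp
  then have "extensions n F \<alpha> = {[]}" by (auto simp: extensions_def)
  with l show ?case by (rule_tac ext) (simp add: fsum_def defect_def next_edges_def fsub_def)
next
  case (Suc k)
  then have l: "length (pq_qedges \<alpha>) < n" by simp
  have IH: "mon (pq_word (pq_ext \<alpha> [f]))
      = fsum (\<lambda>\<gamma>. defect n F (pq_ext (pq_ext \<alpha> [f]) \<gamma>)) (extensions n F (pq_ext \<alpha> [f]))"
    if f: "f \<in> next_edges n F \<alpha>" for f
  proof (rule Suc.hyps(1))
    show "k = n - length (pq_qedges (pq_ext \<alpha> [f]))" using Suc.hyps(2) by simp
    show "pq_ok s r (pq_ext \<alpha> [f])" using Suc.prems(1) f by (simp add: pq_ok_ext1 next_edges_src)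
    show "set (pq_qedges (pq_ext \<alpha> [f])) \<subseteq> F"
      using Suc.prems(2) f l by (simp add: next_edges_def edges_in_def)
    show "length (pq_qedges (pq_ext \<alpha> [f])) \<le> n" using l by simp
  qed
  have "mon (pq_word \<alpha>) = fadd (defect n F \<alpha>) (fsum (\<lambda>f. mon (pq_word (pq_ext \<alpha> [f]))) (next_edges n F \<alpha>))"
    by (rule ext) (simp add: defect_def fadd_def fsub_def)
  also have "\<dots> = fsum (\<lambda>\<gamma>. defect n F (pq_ext \<alpha> \<gamma>)) (extensions n F \<alpha>)"
    unfolding fsum_extensions_step[OF assms(1) l]
    by (rule arg_cong[where f="fadd _"]) (simp add: fsum_def IH)
  finally show ?case .
qed

lemma pq_word_combination_defects:
  assumes "finite A" "\<And>\<alpha>. \<alpha> \<in> A \<Longrightarrow> pq_ok s r \<alpha>"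
  shows "\<exists>F D n c'. finite F \<and> finite D \<and> (\<forall>d\<in>D. admissible n F d) \<and>
    fsum (\<lambda>\<alpha>. fscal (c \<alpha>) (mon (pq_word \<alpha>))) A = fsum (\<lambda>d. fscal (c' d) (defect n F d)) D"
proof -
  define F where "F = (\<Union>\<alpha>\<in>A. set (pq_qedges \<alpha>))"
  define n where "n = Max (insert 0 ((\<lambda>\<alpha>. length (pq_qedges \<alpha>)) ` A))"
  have fF: "finite F" using assms(1) by (simp add: F_def)
  have qF: "set (pq_qedges \<alpha>) \<subseteq> F" "length (pq_qedges \<alpha>) \<le> n" if "\<alpha> \<in> A" for \<alpha>
    using that assms(1) by (auto simp: F_def n_def)
  define \<Sigma> where "\<Sigma> = (SIGMA \<alpha>:A. extensions n F \<alpha>)"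
  define g :: "('v, 'e) pq \<times> 'e list \<Rightarrow> ('v, 'e) pq" where "g = (\<lambda>(\<alpha>, \<gamma>). pq_ext \<alpha> \<gamma>)"
  have fin: "finite \<Sigma>" using assms(1) fF by (simp add: \<Sigma>_def finite_extensions)
  have "fsum (\<lambda>\<alpha>. fscal (c \<alpha>) (mon (pq_word \<alpha>))) A
      = fsum (\<lambda>\<alpha>. fsum (\<lambda>\<gamma>. fscal (c \<alpha>) (defect n F (pq_ext \<alpha> \<gamma>))) (extensions n F \<alpha>)) A"
  proof (rule fsum_cong)
    fix \<alpha> assume "\<alpha> \<in> A"
    then show "fscal (c \<alpha>) (mon (pq_word \<alpha>))
        = fsum (\<lambda>\<gamma>. fscal (c \<alpha>) (defect n F (pq_ext \<alpha> \<gamma>))) (extensions n F \<alpha>)"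
      using mon_pq_word_expansion[OF fF assms(2) qF] by (simp add: fscal_fsum)
  qed
  also have "\<dots> = fsum (\<lambda>x. fscal (c (fst x)) (defect n F (g x))) \<Sigma>"
    using assms(1) fF by (simp add: fsum_Sigma \<Sigma>_def g_def finite_extensions case_prod_unfold)
  also have "\<dots> = fsum (\<lambda>d. fscal (\<Sum>x\<in>{x \<in> \<Sigma>. g x = d}. c (fst x)) (defect n F d)) (g ` \<Sigma>)"
    using fin by (rule fsum_fscal_image)
  finally have eq: "fsum (\<lambda>\<alpha>. fscal (c \<alpha>) (mon (pq_word \<alpha>))) A = \<dots>" .
  have "admissible n F (pq_ext \<alpha> \<gamma>)" if "\<alpha> \<in> A" "\<gamma> \<in> extensions n F \<alpha>" for \<alpha> \<gamma>
    using that assms(2)[OF that(1)] qF[OF that(1)]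
    by (simp add: extensions_def admissible_def pq_ok_ext)
  then have "\<forall>d\<in>g ` \<Sigma>. admissible n F d" by (auto simp: \<Sigma>_def g_def)
  with fF fin eq show ?thesis
    by (intro exI[of _ F] exI[of _ "g ` \<Sigma>"] exI[of _ n]
        exI[of _ "\<lambda>d. \<Sum>x\<in>{x \<in> \<Sigma>. g x = d}. c (fst x)"]) simp
qed

lemma lpa_cong_defect_combination:
  fixes z :: "('v,'e) gen list \<Rightarrow> 'k"
  assumes z: "z \<in> Fset"
  shows "\<exists>F D n c. finite F \<and> finite D \<and> (\<forall>d\<in>D. admissible n F d) \<and>
    lpa_cong s r z (fsum (\<lambda>d. fscal (c d) (defect n F d)) D)"
proof -
  obtain A c0 where fA: "finite A" and okA: "\<And>\<alpha>. \<alpha> \<in> A \<Longrightarrow> pq_ok s r \<alpha>"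
    and z_pq: "lpa_cong s r z (fsum (\<lambda>\<alpha>. fscal (c0 \<alpha>) (mon (pq_word \<alpha>))) A)"
    using lpa_cong_pq_word_combination[OF z] by blast
  have "\<exists>F D n c. finite F \<and> finite D \<and> (\<forall>d\<in>D. admissible n F d) \<and>
      fsum (\<lambda>\<alpha>. fscal (c0 \<alpha>) (mon (pq_word \<alpha>))) A = fsum (\<lambda>d. fscal (c d) (defect n F d)) D"
    using fA okA by (rule pq_word_combination_defects)
  then obtain F D n c where "finite F" "finite D" "\<forall>d\<in>D. admissible n F d"
    and D_eq: "fsum (\<lambda>\<alpha>. fscal (c0 \<alpha>) (mon (pq_word \<alpha>))) A = fsum (\<lambda>d. fscal (c d) (defect n F d)) D"
    by blast
  moreover have "lpa_cong s r z (fsum (\<lambda>d. fscal (c d) (defect n F d)) D)"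
    using z_pq unfolding D_eq .
  ultimately show ?thesis by blast
qed

lemma pq_word_CK2_in_lpa_ideal:
  assumes "regular s w" "pq_ok s r d" "pq_end r d = w"
  shows "fsub (mon (pq_word d) :: _ \<Rightarrow> 'k) (fsum (\<lambda>f. mon (pq_word (pq_ext d [f]))) {e. s e = w}) \<in> lpa_ideal s r"
proof -
  obtain a es u fs where d: "d = (a, es, u, fs)" by (cases d) auto
  let ?x = "walk_word a es" and ?y = "wstar (walk_word u fs)"
  have end_w: "walk_end r a es = w" using assms d by simp
  have walk_a: "walk s r a es" using assms d by (simp add: pq_ok.simps)
  have CK2_sandwich: "fmul (mon ?x :: _ \<Rightarrow> 'k) (fmul (fsub (mon [V w]) (fsum (\<lambda>e. mon [Ed e, Gh e]) {e. s e = w})) (mon ?y)) \<in> lpa_ideal s r"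
    by (intro lpa_ideal_mon_left lpa_ideal_mon_right lpa_ideal.rel lpa_rels_CK2 assms(1))
  have sandwich_eq: "fmul (mon ?x :: _ \<Rightarrow> 'k) (fmul (fsub (mon [V w]) (fsum (\<lambda>e. mon [Ed e, Gh e]) {e. s e = w})) (mon ?y))
     = fsub (mon (?x @ [V w] @ ?y)) (fsum (\<lambda>f. mon (pq_word (pq_ext d [f]))) {e. s e = w})"
    by (simp add: d fmul_sub_left fmul_sub_right fmul_sum_left fmul_sum_right fmul_mon_mon pq_word.simps walk_word_def wstar_append)
  have "wcong s r (?x @ [V w] @ ?y) (?x @ ?y) TYPE('k)"
    using wcong_context[OF walk_word_end[OF walk_a], where a="[]" and b="?y"] end_w by simp
  then have "lpa_cong s r (mon (?x @ [V w] @ ?y) :: _ \<Rightarrow> 'k) (mon (pq_word d))" by (simp add: wcong_def d pq_word.simps)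
  then have "lpa_cong s r (mon (pq_word d) :: _ \<Rightarrow> 'k) (mon (?x @ [V w] @ ?y))" by (rule lpa_cong_sym)
  then have cong_shift: "lpa_cong s r (fsub (mon (pq_word d) :: _ \<Rightarrow> 'k) (fsum (\<lambda>f. mon (pq_word (pq_ext d [f]))) {e. s e = w}))
      (fsub (mon (?x @ [V w] @ ?y)) (fsum (\<lambda>f. mon (pq_word (pq_ext d [f]))) {e. s e = w}))"
    by (rule lpa_cong_sub) simp
  have shift_in_ideal: "lpa_cong s r (fsub (mon (?x @ [V w] @ ?y) :: _ \<Rightarrow> 'k) (fsum (\<lambda>f. mon (pq_word (pq_ext d [f]))) {e. s e = w})) fzero"
    using CK2_sandwich unfolding sandwich_eq by (simp add: lpa_cong_fzero_iff)
  from lpa_cong_trans[OF cong_shift shift_in_ideal] show ?thesis by (simp add: lpa_cong_fzero_iff)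
qed

context
  assumes P_cond: "\<forall>v I. finite I \<longrightarrow> I \<subseteq> {e. s e = v} \<longrightarrow>
              nonneg rs (t (fsub (mon [V v]) (fsum (\<lambda>e. mon [V (r e)]) I)))"
    and F_cond: "\<forall>v. positive rs (t (mon [V v]))"
begin

lemma vertex_minus_ranges_eq_0:
  assumes fI: "finite I" and Is: "I \<subseteq> {e. s e = v}" and z: "vtrace v - (\<Sum>e\<in>I. vtrace (r e)) = 0"
  shows "I = {e. s e = v} \<and> regular s v"
proof -
  have all: "I = {e. s e = v}"
  proof (rule ccontr)
    assume "I \<noteq> {e. s e = v}"
    with Is obtain f0 where f0: "s f0 = v" "f0 \<notin> I" by auto
    let ?rest = "vtrace v - (\<Sum>e\<in>insert f0 I. vtrace (r e))"
    have "nonneg rs ?rest"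
      using P_cond[rule_format, of "insert f0 I" v] fI f0 Is by (simp add: t_vertex_minus_ranges)
    moreover have "positive rs (vtrace (r f0))" using F_cond by (simp add: vtrace_def)
    moreover have "vtrace (r f0) + ?rest = 0" using z fI f0 by (simp add: algebra_simps)
    ultimately have "vtrace (r f0) = 0" by (intro nonneg_add_eq_0D[of "vtrace (r f0)" ?rest]) (simp_all add: positive_def)
    then show False using F_cond by (simp add: vtrace_def positive_def)
  qed
  have "I \<noteq> {}"
  proof
    assume "I = {}"
    then have "vtrace v = 0" using z by simp
    then show False using F_cond by (simp add: vtrace_def positive_def)
  qed
  with all fI show ?thesis by (simp add: regular_def)
qed

lemma defect_norm_nonneg:
  assumes "finite F" "admissible n F d"
  shows "nonneg rs (defect_norm n F d) \<and> (defect_norm n F d = 0 \<longrightarrow> defect n F d \<in> lpa_ideal s r)"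
proof -
  let ?w = "pq_end r d" and ?E = "next_edges n F d"
  have fE: "finite ?E" using assms by (simp add: finite_next_edges)
  have Es: "?E \<subseteq> {e. s e = ?w}" by (auto simp: next_edges_src)
  have "nonneg rs (defect_norm n F d)"
    using P_cond fE Es by (simp add: defect_norm_def t_vertex_minus_ranges)
  moreover have "defect n F d \<in> lpa_ideal s r" if "defect_norm n F d = 0"
  proof -
    have "?E = {e. s e = ?w}" "regular s ?w"
      using vertex_minus_ranges_eq_0[OF fE Es] that by (simp_all add: defect_norm_def)
    then show ?thesis using pq_word_CK2_in_lpa_ideal assms by (simp add: defect_def admissible_def)
  qed
  ultimately show ?thesis by blast
qed

lemma t_hermitian_square_defect_combination:
  fixes c :: "('v, 'e) pq \<Rightarrow> 'k"
  assumes fF: "finite F" and fD: "finite D" and gd: "\<forall>d\<in>D. admissible n F d"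
  defines "Z \<equiv> fsum (\<lambda>d. fscal (c d) (defect n F d)) D"
  shows "nonneg rs (t (fmul Z (fstar ks Z))) \<and> (t (fmul Z (fstar ks Z)) = 0 \<longrightarrow> Z \<in> lpa_ideal s r)"
proof -
  have tZ: "t (fmul Z (fstar ks Z)) = (\<Sum>d\<in>D. sc (c d * ks (c d)) (defect_norm n F d))"
    unfolding Z_def using fF fD gd by (intro t_hermitian_square_defects) auto
  have nn: "\<And>d. d \<in> D \<Longrightarrow> nonneg rs (sc (c d * ks (c d)) (defect_norm n F d))"
    using defect_norm_nonneg gd fF by (intro nonneg_sc_norm) auto
  have "fscal (c d) (defect n F d) \<in> lpa_ideal s r"
    if "t (fmul Z (fstar ks Z)) = 0" "d \<in> D" for d
  proof (cases "defect_norm n F d = 0")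
    case True
    then have "defect n F d \<in> lpa_ideal s r" using defect_norm_nonneg[OF fF] gd that(2) by blast
    then show ?thesis by (rule lpa_ideal.scal)
  next
    case False
    then have "positive rs (defect_norm n F d)"
      using defect_norm_nonneg[OF fF] gd that(2) by (simp add: positive_def)
    moreover have "sc (c d * ks (c d)) (defect_norm n F d) = 0"
      using that tZ by (intro nonneg_sum_eq_0D[OF fD nn]) simp_all
    ultimately have "c d = 0" by (rule positive_sc_norm_eq_0D)
    moreover have "fscal 0 x = fzero" for x :: "('v,'e) gen list \<Rightarrow> 'k"
      by (rule ext) (simp add: fscal_def fzero_def)
    ultimately show ?thesis by (simp add: lpa_ideal.zero)
  qed
  then have "t (fmul Z (fstar ks Z)) = 0 \<Longrightarrow> Z \<in> lpa_ideal s r"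
    unfolding Z_def by (intro lpa_ideal_fsum) (simp add: Z_def)
  with tZ nn show ?thesis by (auto intro: nonneg_sum)
qed

lemma t_hermitian_square:
  fixes z :: "('v,'e) gen list \<Rightarrow> 'k"
  assumes z: "z \<in> Fset"
  shows "nonneg rs (t (fmul z (fstar ks z))) \<and> (t (fmul z (fstar ks z)) = 0 \<longrightarrow> z \<in> lpa_ideal s r)"
proof -
  obtain F D n c where fF: "finite F" and fD: "finite D" and gd: "\<forall>d\<in>D. admissible n F d"
    and eq: "lpa_cong s r z (fsum (\<lambda>d. fscal (c d) (defect n F d)) D)"
    using lpa_cong_defect_combination[OF z] by blast
  let ?Z = "fsum (\<lambda>d. fscal (c d) (defect n F d)) D"
  have ZF: "?Z \<in> Fset" using fD fF by (intro Fset_fsum Fset_scal Fset_defect)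
  have "lpa_cong s r (fmul z (fstar ks z)) (fmul ?Z (fstar ks ?Z))"
    using eq lpa_cong_fstar[OF eq] z ZF by (intro lpa_cong_mul) (simp_all add: Fset_fstar)
  then have "t (fmul z (fstar ks z)) = t (fmul ?Z (fstar ks ?Z))"
    using z ZF by (intro t_lpa_cong) (simp_all add: Fset_mul Fset_fstar)
  moreover have "z \<in> lpa_ideal s r" if "?Z \<in> lpa_ideal s r"
    using lpa_cong_trans[OF eq that[folded lpa_cong_fzero_iff]] by (simp add: lpa_cong_fzero_iff)
  ultimately show ?thesis
    using t_hermitian_square_defect_combination[OF fF fD gd, where c=c] by auto
qed

lemma faithful_if_conditions: "faithful s r ks rs t"
  unfolding faithful_def
proof (intro ballI impI)
  fix x assume xF: "x \<in> Fset" and "lpa_positive s r ks x"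
  then obtain zs where zs: "set zs \<subseteq> Fset" and xn: "x \<notin> lpa_ideal s r"
    and xe: "lpa_cong s r x (fsum_list (map (\<lambda>z. fmul z (fstar ks z)) zs))"
    by (auto simp: lpa_positive_def lpa_cong_def)
  let ?L = "fsum_list (map (\<lambda>z. fmul z (fstar ks z)) zs)"
  have LF: "set (map (\<lambda>z. fmul z (fstar ks z)) zs) \<subseteq> Fset"
    using zs by (auto intro: Fset_mul Fset_fstar)
  have "t x = t ?L"
    using xe xF LF by (intro t_lpa_cong) (simp_all add: Fset_fsum_list)
  also have "\<dots> = (\<Sum>z\<leftarrow>zs. t (fmul z (fstar ks z)))"
    using LF by (simp add: t_fsum_list comp_def)
  finally have tx: "t x = (\<Sum>z\<leftarrow>zs. t (fmul z (fstar ks z)))" .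
  have nn: "\<And>z. z \<in> set zs \<Longrightarrow> nonneg rs (t (fmul z (fstar ks z)))"
    using t_hermitian_square zs by blast
  have "t x \<noteq> 0"
  proof
    assume "t x = 0"
    then have "\<And>z. z \<in> set zs \<Longrightarrow> t (fmul z (fstar ks z)) = 0"
      using nonneg_sum_list_eq_0D[of zs "\<lambda>z. t (fmul z (fstar ks z))", OF nn] tx by auto
    then have "\<And>z. z \<in> set zs \<Longrightarrow> fmul z (fstar ks z) \<in> lpa_ideal s r"
      using t_hermitian_square zs by (blast intro: lpa_ideal.mult_right Fset_fstar)
    then have "lpa_cong s r ?L fzero"
      by (auto simp: lpa_cong_fzero_iff intro!: lpa_ideal_fsum_list)
    with xe xn show False using lpa_cong_trans lpa_cong_fzero_iff by blast
  qed
  moreover have "nonneg rs (t x)" unfolding tx using nn by (rule nonneg_sum_list)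
  ultimately show "positive rs (t x)" by (simp add: positive_def)
qed

end

end

section \<open>Vertices are not in the ideal\<close>

text \<open>L_K(E) acts on boundary paths, i.e. infinite paths and finite paths ending at a
  non-regular vertex: v fixes the paths starting at v, e prepends e and e^* removes a leading e.
  The relations act as zero, so every element of the ideal has vanishing matrix coefficients
  act_coeff, whereas a vertex v fixes a boundary path starting at v.\<close>

datatype ('v, 'e) bpath = Fin 'v "'e list" | Inf "nat \<Rightarrow> 'e"

fun boundary_walk :: "('e \<Rightarrow> 'v) \<Rightarrow> ('e \<Rightarrow> 'v) \<Rightarrow> 'v \<Rightarrow> 'e list \<Rightarrow> bool" where
  "boundary_walk s r v [] = (\<not> regular s v)"
| "boundary_walk s r v (e # es) = (s e = v \<and> boundary_walk s r (r e) es)"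

fun is_bpath :: "('e \<Rightarrow> 'v) \<Rightarrow> ('e \<Rightarrow> 'v) \<Rightarrow> ('v, 'e) bpath \<Rightarrow> bool" where
  "is_bpath s r (Fin v es) = boundary_walk s r v es"
| "is_bpath s r (Inf f) = (\<forall>n. r (f n) = s (f (Suc n)))"

fun bpath_src :: "('e \<Rightarrow> 'v) \<Rightarrow> ('v, 'e) bpath \<Rightarrow> 'v" where
  "bpath_src s (Fin v es) = v"
| "bpath_src s (Inf f) = s (f 0)"

fun bpath_cons :: "('e \<Rightarrow> 'v) \<Rightarrow> 'e \<Rightarrow> ('v, 'e) bpath \<Rightarrow> ('v, 'e) bpath" where
  "bpath_cons s e (Fin v es) = Fin (s e) (e # es)"
| "bpath_cons s e (Inf f) = Inf (case_nat e f)"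

fun gen_act :: "('e \<Rightarrow> 'v) \<Rightarrow> ('e \<Rightarrow> 'v) \<Rightarrow> ('v, 'e) gen \<Rightarrow> ('v, 'e) bpath \<Rightarrow> ('v, 'e) bpath option" where
  "gen_act s r (V u) x = (if bpath_src s x = u then Some x else None)"
| "gen_act s r (Ed e) x = (if bpath_src s x = r e then Some (bpath_cons s e x) else None)"
| "gen_act s r (Gh e) (Fin v []) = None"
| "gen_act s r (Gh e) (Fin v (e' # es)) = (if e' = e then Some (Fin (r e) es) else None)"
| "gen_act s r (Gh e) (Inf f) = (if f 0 = e then Some (Inf (\<lambda>n. f (Suc n))) else None)"

fun word_act :: "('e \<Rightarrow> 'v) \<Rightarrow> ('e \<Rightarrow> 'v) \<Rightarrow> ('v, 'e) gen list \<Rightarrow> ('v, 'e) bpath \<Rightarrow> ('v, 'e) bpath option" where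
  "word_act s r [] x = Some x"
| "word_act s r (g # w) x = Option.bind (word_act s r w x) (gen_act s r g)"

lemma word_act_append: "word_act s r (u @ w) x = Option.bind (word_act s r w x) (word_act s r u)"
  by (induction u) (auto simp: Option.bind_assoc)

lemma is_bpath_gen_act:
  assumes "is_bpath s r x" "gen_act s r g x = Some y"
  shows "is_bpath s r y"
proof (cases g)
  case (V u) then show ?thesis using assms by (auto split: if_splits)
next
  case (Ed e) then show ?thesis using assms by (cases x) (auto split: if_splits nat.splits)
next
  case (Gh e)
  show ?thesis
  proof (cases x)
    case (Fin v es) then show ?thesis using assms Gh by (cases es) (auto split: if_splits)
  qed (use assms Gh in \<open>auto split: if_splits\<close>)
qed

lemma is_bpath_word_act: "is_bpath s r x \<Longrightarrow> word_act s r w x = Some y \<Longrightarrow> is_bpath s r y"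
proof (induction w arbitrary: y)
  case Nil then show ?case by simp
next
  case (Cons g w)
  then obtain z where "word_act s r w x = Some z" "gen_act s r g z = Some y" by (auto split: Option.bind_splits)
  then show ?case using Cons is_bpath_gen_act by blast
qed

lemma gen_act_gswap:
  assumes "is_bpath s r x" "gen_act s r g x = Some y"
  shows "gen_act s r (gswap g) y = Some x"
proof (cases g)
  case (V u) then show ?thesis using assms by (auto split: if_splits)
next
  case (Ed e) then show ?thesis using assms
    by (cases x) (auto split: if_splits simp: fun_eq_iff split: nat.splits)
next
  case (Gh e)
  show ?thesis
  proof (cases x)
    case (Fin v es) then show ?thesis using assms Gh by (cases es) (auto split: if_splits)
  next
    case (Inf f)
    have "case_nat e (\<lambda>n. f (Suc n)) = f" if "f 0 = e" using that by (auto simp: fun_eq_iff split: nat.splits)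
    then show ?thesis using assms Gh Inf by (auto split: if_splits)
  qed
qed

lemma gen_act_inj:
  assumes "is_bpath s r x" "is_bpath s r x'" "gen_act s r g x = Some y" "gen_act s r g x' = Some y"
  shows "x = x'"
  using gen_act_gswap[OF assms(1,3)] gen_act_gswap[OF assms(2,4)] by simp

lemma word_act_inj: "is_bpath s r x \<Longrightarrow> is_bpath s r x' \<Longrightarrow> word_act s r w x = Some y \<Longrightarrow> word_act s r w x' = Some y \<Longrightarrow> x = x'"
proof (induction w arbitrary: y)
  case Nil then show ?case by simp
next
  case (Cons g w)
  then obtain z z' where "word_act s r w x = Some z" "gen_act s r g z = Some y"
     "word_act s r w x' = Some z'" "gen_act s r g z' = Some y" by (auto split: Option.bind_splits)
  moreover have "is_bpath s r z" "is_bpath s r z'" using calculation Cons.prems is_bpath_word_act by blast+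
  ultimately have "z = z'" using gen_act_inj by blast
  then show ?case using Cons \<open>word_act s r w x = Some z\<close> \<open>word_act s r w x' = Some z'\<close> by blast
qed

definition act_coeff :: "('e \<Rightarrow> 'v) \<Rightarrow> ('e \<Rightarrow> 'v) \<Rightarrow> ('v, 'e) bpath \<Rightarrow> ('v, 'e) bpath \<Rightarrow> (('v, 'e) gen list \<Rightarrow> 'k::field) \<Rightarrow> 'k" where
  "act_coeff s r x y h = (\<Sum>w\<in>{w. h w \<noteq> 0}. if word_act s r w x = Some y then h w else 0)"

lemma act_coeff_superset: "finite W \<Longrightarrow> {w. h w \<noteq> 0} \<subseteq> W \<Longrightarrow> act_coeff s r x y h = (\<Sum>w\<in>W. if word_act s r w x = Some y then h w else 0)"
  unfolding act_coeff_def by (rule sum.mono_neutral_left) auto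

lemma act_coeff_fadd: assumes "finsupp h1" "finsupp h2" shows "act_coeff s r x y (fadd h1 h2) = act_coeff s r x y h1 + act_coeff s r x y h2"
proof -
  let ?W = "{w. h1 w \<noteq> 0} \<union> {w. h2 w \<noteq> 0}"
  have "act_coeff s r x y (fadd h1 h2) = (\<Sum>w\<in>?W. if word_act s r w x = Some y then fadd h1 h2 w else 0)"
    using assms by (intro act_coeff_superset) (auto simp: fadd_def)
  also have "\<dots> = (\<Sum>w\<in>?W. if word_act s r w x = Some y then h1 w else 0) + (\<Sum>w\<in>?W. if word_act s r w x = Some y then h2 w else 0)"
    by (simp add: fadd_def sum.distrib[symmetric] if_distrib cong: if_cong)
  also have "\<dots> = act_coeff s r x y h1 + act_coeff s r x y h2"
  proof -
    have "act_coeff s r x y h1 = (\<Sum>w\<in>?W. if word_act s r w x = Some y then h1 w else 0)"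
      using assms by (intro act_coeff_superset) auto
    moreover have "act_coeff s r x y h2 = (\<Sum>w\<in>?W. if word_act s r w x = Some y then h2 w else 0)"
      using assms by (intro act_coeff_superset) auto
    ultimately show ?thesis by simp
  qed
  finally show ?thesis .
qed

lemma act_coeff_fscal: assumes "finsupp h" shows "act_coeff s r x y (fscal a h) = a * act_coeff s r x y h"
proof -
  have "act_coeff s r x y (fscal a h) = (\<Sum>w\<in>{w. h w \<noteq> 0}. if word_act s r w x = Some y then fscal a h w else 0)"
    using assms by (intro act_coeff_superset) (auto simp: fscal_def)
  also have "\<dots> = a * act_coeff s r x y h"
    unfolding act_coeff_def by (simp add: sum_distrib_left fscal_def if_distrib cong: if_cong)
  finally show ?thesis .
qed

lemma act_coeff_mon: "act_coeff s r x y (mon u :: _ \<Rightarrow> 'k::field) = (if word_act s r u x = Some y then 1 else 0)"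
proof -
  have "act_coeff s r x y (mon u :: _ \<Rightarrow> 'k::field) = (\<Sum>w\<in>{u}. if word_act s r w x = Some y then mon u w else 0)"
    by (intro act_coeff_superset) (auto simp: mon_def)
  then show ?thesis by (simp add: mon_def)
qed

lemma act_coeff_fzero: "act_coeff s r x y fzero = 0" by (simp add: act_coeff_def fzero_def)

lemma act_coeff_fsub: "finsupp h1 \<Longrightarrow> finsupp h2 \<Longrightarrow> act_coeff s r x y (fsub h1 h2) = act_coeff s r x y h1 - act_coeff s r x y h2"
  using act_coeff_fadd[of h1 "fscal (-1) h2"] act_coeff_fscal[of h2 s r x y "-1"] finsupp_fscal[of h2 "-1"]
  by (simp add: fsub_as_add)

lemma act_coeff_fsum: "finite A \<Longrightarrow> (\<And>a. a \<in> A \<Longrightarrow> finsupp (g a)) \<Longrightarrow> act_coeff s r x y (fsum g A) = (\<Sum>a\<in>A. act_coeff s r x y (g a))"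
proof (induction A rule: finite_induct)
  case empty then show ?case by (simp add: act_coeff_fzero)
next
  case (insert a A) then show ?case by (simp add: fsum_insert act_coeff_fadd finsupp_fsum)
qed

lemma act_coeff_mon_mult: assumes "finsupp h"
  shows "act_coeff s r x y (fmul (mon u) h) = (\<Sum>w\<in>{w. h w \<noteq> 0}. if word_act s r (u @ w) x = Some y then h w else 0)"
proof -
  let ?W = "(\<lambda>w. u @ w) ` {w. h w \<noteq> 0}"
  have "act_coeff s r x y (fmul (mon u) h) = (\<Sum>w\<in>?W. if word_act s r w x = Some y then fmul (mon u) h w else 0)"
    using assms by (intro act_coeff_superset) (auto dest!: fmul_mon_left_supp)
  also have "\<dots> = (\<Sum>w\<in>{w. h w \<noteq> 0}. if word_act s r (u @ w) x = Some y then h w else 0)"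
    by (subst sum.reindex) (auto simp: inj_on_def fmul_mon_left_app cong: if_cong)
  finally show ?thesis .
qed

lemma act_coeff_mult_mon: assumes "finsupp h"
  shows "act_coeff s r x y (fmul h (mon u)) = (\<Sum>w\<in>{w. h w \<noteq> 0}. if word_act s r (w @ u) x = Some y then h w else 0)"
proof -
  let ?W = "(\<lambda>w. w @ u) ` {w. h w \<noteq> 0}"
  have "act_coeff s r x y (fmul h (mon u)) = (\<Sum>w\<in>?W. if word_act s r w x = Some y then fmul h (mon u) w else 0)"
    using assms by (intro act_coeff_superset) (auto dest!: fmul_mon_right_supp)
  also have "\<dots> = (\<Sum>w\<in>{w. h w \<noteq> 0}. if word_act s r (w @ u) x = Some y then h w else 0)"
    by (subst sum.reindex) (auto simp: inj_on_def fmul_mon_right_app cong: if_cong)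
  finally show ?thesis .
qed

definition act_null :: "('e \<Rightarrow> 'v) \<Rightarrow> ('e \<Rightarrow> 'v) \<Rightarrow> (('v, 'e) gen list \<Rightarrow> 'k::field) \<Rightarrow> bool" where
  "act_null s r h \<longleftrightarrow> finsupp h \<and> (\<forall>x y. is_bpath s r x \<longrightarrow> act_coeff s r x y h = 0)"

lemma word_act_append_eq_Some_iff:
  assumes x: "is_bpath s r x" and z0: "word_act s r w0 x = Some z0" "word_act s r u z0 = Some y"
  shows "word_act s r (u @ w) x = Some y \<longleftrightarrow> word_act s r w x = Some z0"
proof
  assume "word_act s r (u @ w) x = Some y"
  then obtain z where z: "word_act s r w x = Some z" "word_act s r u z = Some y"
    by (auto simp: word_act_append split: Option.bind_splits)
  have "z = z0"
    using word_act_inj[OF is_bpath_word_act[OF x z(1)] is_bpath_word_act[OF x z0(1)] z(2) z0(2)] .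
  with z show "word_act s r w x = Some z0" by simp
qed (use z0 in \<open>simp add: word_act_append\<close>)

lemma act_null_mon_mult:
  assumes "act_null s r h"
  shows "act_null s r (fmul (mon u) h)"
proof -
  have fh: "finsupp h" using assms by (simp add: act_null_def)
  have "finsupp (fmul (mon u) h)"
    by (rule finite_subset[of _ "(\<lambda>w. u @ w) ` {w. h w \<noteq> 0}"]) (use fh in \<open>auto dest!: fmul_mon_left_supp\<close>)
  moreover have "act_coeff s r x y (fmul (mon u) h) = 0" if x: "is_bpath s r x" for x y
  proof (cases "\<exists>w0. word_act s r (u @ w0) x = Some y")
    case True
    then obtain w0 z0 where z0: "word_act s r w0 x = Some z0" "word_act s r u z0 = Some y"
      by (auto simp: word_act_append split: Option.bind_splits)
    then have "act_coeff s r x y (fmul (mon u) h) = act_coeff s r x z0 h"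
      using word_act_append_eq_Some_iff[OF x z0]
      by (simp only: act_coeff_mon_mult[OF fh]) (simp add: act_coeff_def)
    then show ?thesis using assms x z0(1) is_bpath_word_act by (simp add: act_null_def)
  next
    case False
    then show ?thesis by (simp add: act_coeff_mon_mult[OF fh])
  qed
  ultimately show ?thesis by (simp add: act_null_def)
qed

lemma act_null_mult_mon: assumes "act_null s r h" shows "act_null s r (fmul h (mon u))"
proof -
  have fh: "finsupp h" using assms by (simp add: act_null_def)
  have finsupp: "finsupp (fmul h (mon u))"
    by (rule finite_subset[of _ "(\<lambda>w. w @ u) ` {w. h w \<noteq> 0}"]) (use fh in \<open>auto dest!: fmul_mon_right_supp\<close>)
  have "act_coeff s r x y (fmul h (mon u)) = 0" if x: "is_bpath s r x" for x y
  proof (cases "word_act s r u x")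
    case None
    then show ?thesis by (simp add: act_coeff_mult_mon[OF fh] word_act_append)
  next
    case (Some x')
    have "is_bpath s r x'" using is_bpath_word_act[OF x Some] .
    moreover have "act_coeff s r x y (fmul h (mon u)) = act_coeff s r x' y h"
      by (simp only: act_coeff_mult_mon[OF fh]) (simp add: act_coeff_def word_act_append Some)
    ultimately show ?thesis using assms by (simp add: act_null_def)
  qed
  with finsupp show ?thesis by (simp add: act_null_def)
qed

lemma act_null_fadd: "act_null s r h1 \<Longrightarrow> act_null s r h2 \<Longrightarrow> act_null s r (fadd h1 h2)"
  by (simp add: act_null_def finsupp_fadd act_coeff_fadd)
lemma act_null_fscal: "act_null s r h \<Longrightarrow> act_null s r (fscal a h)"
  by (simp add: act_null_def finsupp_fscal act_coeff_fscal)
lemma act_null_fsum: "finite A \<Longrightarrow> (\<And>a. a \<in> A \<Longrightarrow> act_null s r (g a)) \<Longrightarrow> act_null s r (fsum g A)"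
  by (simp add: act_null_def finsupp_fsum act_coeff_fsum)

lemma act_null_mult_left: "act_null s r h \<Longrightarrow> f \<in> Fset \<Longrightarrow> act_null s r (fmul f h)"
proof -
  assume h: "act_null s r h" and f: "f \<in> Fset"
  then have ff: "finsupp f" by (simp add: Fset_def)
  have "fmul f h = fsum (\<lambda>u. fscal (f u) (fmul (mon u) h)) {w. f w \<noteq> 0}"
    by (subst fsum_mon_expansion[OF ff]) (simp add: fmul_sum_left fmul_scal_left)
  then show ?thesis using ff h by (simp add: act_null_fsum act_null_fscal act_null_mon_mult)
qed

lemma act_null_mult_right: "act_null s r h \<Longrightarrow> f \<in> Fset \<Longrightarrow> act_null s r (fmul h f)"
proof -
  assume h: "act_null s r h" and f: "f \<in> Fset"
  then have ff: "finsupp f" by (simp add: Fset_def)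
  have "fmul h f = fsum (\<lambda>u. fscal (f u) (fmul h (mon u))) {w. f w \<noteq> 0}"
    by (subst fsum_mon_expansion[OF ff]) (simp add: fmul_sum_right fmul_scal_right)
  then show ?thesis using ff h by (simp add: act_null_fsum act_null_fscal act_null_mult_mon)
qed

fun first_edge :: "('v, 'e) bpath \<Rightarrow> 'e option" where
  "first_edge (Fin v []) = None"
| "first_edge (Fin v (e # es)) = Some e"
| "first_edge (Inf f) = Some (f 0)"

lemma bpath_src_bpath_cons[simp]: "bpath_src s (bpath_cons s e x) = s e"
  by (cases x) auto

lemma word_act_EG: "is_bpath s r x \<Longrightarrow> word_act s r [Ed e, Gh e] x = (if first_edge x = Some e then Some x else None)"
proof (cases x)
  case (Fin v es)
  then show "is_bpath s r x \<Longrightarrow> ?thesis" by (cases es) auto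
next
  case (Inf f)
  assume B: "is_bpath s r x"
  show ?thesis
  proof (cases "f 0 = e")
    case True
    have "case_nat e (\<lambda>n. f (Suc n)) = f" using True by (rule_tac ext) (simp split: nat.splits)
    then show ?thesis using Inf B True by auto
  qed (use Inf in auto)
qed

lemma first_edge_src: "is_bpath s r x \<Longrightarrow> first_edge x = Some e \<Longrightarrow> s e = bpath_src s x"
  by (cases x rule: first_edge.cases) auto

lemma first_edge_None: "is_bpath s r x \<Longrightarrow> first_edge x = None \<Longrightarrow> \<not> regular s (bpath_src s x)"
  by (cases x rule: first_edge.cases) auto

lemma word_act_VG: "is_bpath s r x \<Longrightarrow> word_act s r [V (r e), Gh e] x = word_act s r [Gh e] x"
  by (cases x rule: first_edge.cases) (auto split: if_splits)

lemma word_act_GV: "is_bpath s r x \<Longrightarrow> word_act s r [Gh e, V (s e)] x = word_act s r [Gh e] x"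
  by (cases x rule: first_edge.cases) (auto split: if_splits)

lemma word_act_GE: "is_bpath s r x \<Longrightarrow> word_act s r [Gh e, Ed f] x = (if e = f then word_act s r [V (r e)] x else None)"
proof (cases x)
  case (Fin v es) then show "is_bpath s r x \<Longrightarrow> ?thesis" by auto
next
  case (Inf g)
  have "(\<lambda>n. case_nat f g (Suc n)) = g" by simp
  then show "is_bpath s r x \<Longrightarrow> ?thesis" using Inf by auto
qed

lemma act_coeff_fsub_mon: "act_coeff s r x y (fsub (mon a) (mon b) :: _ \<Rightarrow> 'k::field) = (if word_act s r a x = Some y then 1 else 0) - (if word_act s r b x = Some y then 1 else 0)"
  by (simp add: act_coeff_fsub finsupp_mon act_coeff_mon)

lemma word_act_edge_ghost_count:
  assumes B: "is_bpath s r x" and reg: "regular s v"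
  shows "(\<Sum>e\<in>{e. s e = v}. if word_act s r [Ed e, Gh e] x = Some y then 1 else 0 :: 'k::field)
    = (if word_act s r [V v] x = Some y then 1 else 0)"
proof (cases "bpath_src s x = v")
  case True
  then obtain e0 where e0: "first_edge x = Some e0"
    using first_edge_None[OF B] reg by (cases "first_edge x") auto
  have fv: "finite {e. s e = v}" and se0: "s e0 = v"
    using reg first_edge_src[OF B e0] True by (auto simp: regular_def)
  have "(\<Sum>e\<in>{e. s e = v}. if word_act s r [Ed e, Gh e] x = Some y then 1 else 0 :: 'k)
      = (\<Sum>e\<in>{e. s e = v}. if e = e0 then (if x = y then 1 else 0) else 0)"
    by (rule sum.cong) (auto simp: word_act_EG[OF B] e0 simp del: word_act.simps)
  also have "\<dots> = (if x = y then 1 else 0)" using fv se0 by (simp add: sum.delta')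
  finally show ?thesis using True by auto
next
  case False
  then have "word_act s r [Ed e, Gh e] x \<noteq> Some y" if "s e = v" for e
    using that first_edge_src[OF B] by (auto simp: word_act_EG[OF B] simp del: word_act.simps)
  with False show ?thesis by simp
qed

lemma lpa_rels_act_null:
  assumes "h \<in> lpa_rels s r"
  shows "act_null s r (h :: _ \<Rightarrow> 'k::field)"
proof -
  have "act_coeff s r x y h = 0" if B: "is_bpath s r x" for x y
    using assms
  proof (cases rule: lpa_relsE)
    case (V v w)
    show ?thesis
    proof (cases "v = w")
      case True then show ?thesis using V by (auto simp: act_coeff_fsub_mon)
    next
      case False then show ?thesis
        using V by (simp add: act_coeff_fsub finsupp_mon finsupp_fzero act_coeff_mon act_coeff_fzero)
    qed
  next
    case (sE e) then show ?thesis by (auto simp: act_coeff_fsub_mon)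
  next
    case (Er e) then show ?thesis by (simp add: act_coeff_fsub_mon)
  next
    case (rG e) then show ?thesis using word_act_VG[OF B, of e] by (simp only: act_coeff_fsub_mon) simp
  next
    case (Gs e) then show ?thesis using word_act_GV[OF B, of e] by (simp only: act_coeff_fsub_mon) simp
  next
    case (CK1 e f) then show ?thesis using word_act_GE[OF B, of e f]
      by (cases "e = f") (simp_all add: act_coeff_fsub finsupp_mon finsupp_fzero act_coeff_mon act_coeff_fzero)
  next
    case (CK2 v)
    then have "finite {e. s e = v}" by (simp add: regular_def)
    then have "act_coeff s r x y h = (if word_act s r [V v] x = Some y then 1 else 0)
        - (\<Sum>e\<in>{e. s e = v}. if word_act s r [Ed e, Gh e] x = Some y then 1 else 0)"
      by (simp only: CK2(1) act_coeff_fsub finsupp_mon finsupp_fsum act_coeff_fsum act_coeff_mon)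
    then show ?thesis using word_act_edge_ghost_count[OF B CK2(2), of y, where 'k='k] by (simp del: word_act.simps)
  qed
  with lpa_rels_Fset[OF assms] show ?thesis by (simp add: act_null_def Fset_def)
qed

lemma lpa_ideal_act_null: "h \<in> lpa_ideal s r \<Longrightarrow> act_null s r h"
proof (induction rule: lpa_ideal.induct)
  case (rel x) then show ?case by (rule lpa_rels_act_null)
next
  case zero then show ?case by (simp add: act_null_def finsupp_fzero act_coeff_fzero)
next
  case (add x y) then show ?case by (blast intro: act_null_fadd)
next
  case (scal x a) then show ?case by (blast intro: act_null_fscal)
next
  case (mult_left x f) then show ?case by (blast intro: act_null_mult_left)
next
  case (mult_right x f) then show ?case by (blast intro: act_null_mult_right)
qed

definition greedy_edge :: "('e \<Rightarrow> 'v) \<Rightarrow> 'v \<Rightarrow> 'e" where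
  "greedy_edge s w = (SOME e. s e = w)"

fun greedy_vertices :: "('e \<Rightarrow> 'v) \<Rightarrow> ('e \<Rightarrow> 'v) \<Rightarrow> 'v \<Rightarrow> nat \<Rightarrow> 'v" where
  "greedy_vertices s r v 0 = v"
| "greedy_vertices s r v (Suc n) = r (greedy_edge s (greedy_vertices s r v n))"

lemma greedy_edge_src: "regular s w \<Longrightarrow> s (greedy_edge s w) = w"
  unfolding greedy_edge_def regular_def by (auto intro: someI)

lemma boundary_walk_greedy:
  assumes "\<And>i. i < N \<Longrightarrow> regular s (greedy_vertices s r v i)" "\<not> regular s (greedy_vertices s r v N)"
  shows "k \<le> N \<Longrightarrow> boundary_walk s r (greedy_vertices s r v k)
    (map (\<lambda>i. greedy_edge s (greedy_vertices s r v i)) [k..<N])"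
proof (induction "N - k" arbitrary: k)
  case 0 then show ?case using assms(2) by simp
next
  case (Suc m)
  then have kN: "k < N" and split: "[k..<N] = k # [Suc k..<N]" by (simp_all add: upt_conv_Cons)
  have "boundary_walk s r (greedy_vertices s r v (Suc k))
      (map (\<lambda>i. greedy_edge s (greedy_vertices s r v i)) [Suc k..<N])"
    using Suc.hyps(1)[of "Suc k"] Suc.hyps(2) kN by simp
  then show ?case using greedy_edge_src[OF assms(1)[OF kN]] by (simp add: split)
qed

lemma bpath_from_vertex: "\<exists>x. is_bpath s r x \<and> bpath_src s x = v"
proof (cases "\<forall>n. regular s (greedy_vertices s r v n)")
  case True
  let ?x = "Inf (\<lambda>n. greedy_edge s (greedy_vertices s r v n))"
  have "s (greedy_edge s (greedy_vertices s r v (Suc n))) = greedy_vertices s r v (Suc n)" for n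
    using True[rule_format, of "Suc n"] by (rule greedy_edge_src)
  then have "is_bpath s r ?x" by simp
  moreover have "bpath_src s ?x = v" using True[rule_format, of 0] by (simp add: greedy_edge_src)
  ultimately show ?thesis by blast
next
  case False
  define N where "N = (LEAST n. \<not> regular s (greedy_vertices s r v n))"
  have "\<not> regular s (greedy_vertices s r v N)"
    using LeastI_ex[of "\<lambda>n. \<not> regular s (greedy_vertices s r v n)"] False by (simp add: N_def)
  moreover have "regular s (greedy_vertices s r v i)" if "i < N" for i
    using that not_less_Least N_def by blast
  ultimately have "is_bpath s r (Fin v (map (\<lambda>i. greedy_edge s (greedy_vertices s r v i)) [0..<N]))"
    using boundary_walk_greedy[of N s r v 0] by simp
  then show ?thesis by (metis bpath_src.simps(1))
qed

lemma vertex_notin_lpa_ideal: "(mon [V v] :: _ \<Rightarrow> 'k::field) \<notin> lpa_ideal s r"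
proof
  assume "(mon [V v] :: _ \<Rightarrow> 'k::field) \<in> lpa_ideal s r"
  then have vnull: "act_null s r (mon [V v] :: _ \<Rightarrow> 'k)" by (rule lpa_ideal_act_null)
  obtain x where x: "is_bpath s r x" "bpath_src s x = v"
    using bpath_from_vertex[of s r v] by (elim exE conjE)
  have "act_coeff s r x x (mon [V v] :: _ \<Rightarrow> 'k) = 1" using x by (simp add: act_coeff_mon)
  moreover have "act_coeff s r x x (mon [V v] :: _ \<Rightarrow> 'k) = 0" using vnull x unfolding act_null_def by blast
  ultimately show False by simp
qed

section \<open>Faithfulness\<close>

lemma lpa_positive_if_cong_hermitian_square:
  "y \<in> Fset \<Longrightarrow> y \<notin> lpa_ideal s r \<Longrightarrow> lpa_cong s r y (fmul y (fstar ks y)) \<Longrightarrow> lpa_positive s r ks y"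
  unfolding lpa_positive_def lpa_cong_def by (intro conjI exI[of _ "[y]"]) simp_all

lemma lpa_cong_edge_ghost_mult:
  "lpa_cong s r (mon [Ed e, Gh e, Ed f, Gh f] :: _ \<Rightarrow> 'k::field)
     (if e = f then mon [Ed e, Gh e] else fzero)"
proof (cases "e = f")
  case True
  have "wcong s r [Ed e, Gh e, Ed e, Gh e] [Ed e, V (r e), Gh e] TYPE('k)"
    using wcong_context[OF wcong_CK1[of s r e "TYPE('k)"], where a="[Ed e]" and b="[Gh e]"] by simp
  also have "wcong s r [Ed e, V (r e), Gh e] [Ed e, Gh e] TYPE('k)"
    using wcong_context[OF wcong_Er[of s r e "TYPE('k)"], where a="[]" and b="[Gh e]"] by simp
  finally show ?thesis using True by (simp add: wcong_def)
next
  case False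
  then have "wnull s r ([Ed e] @ [Gh e, Ed f] @ [Gh f]) TYPE('k)"
    by (intro wnull_context wnull_CK1)
  then show ?thesis using False by (simp add: wnull_def lpa_cong_fzero_iff)
qed

lemma edge_ghost_sum_idem:
  assumes "finite I"
  shows "lpa_cong s r (fmul (fsum (\<lambda>e. mon [Ed e, Gh e]) I) (fsum (\<lambda>e. mon [Ed e, Gh e]) I))
           (fsum (\<lambda>e. mon [Ed e, Gh e] :: _ \<Rightarrow> 'k::field) I)"
proof -
  have "lpa_cong s r (fsum (\<lambda>e. fsum (\<lambda>f. mon [Ed f, Gh f, Ed e, Gh e] :: _ \<Rightarrow> 'k) I) I)
      (fsum (\<lambda>e. fsum (\<lambda>f. if f = e then mon [Ed f, Gh f] else fzero) I) I)"
    by (intro lpa_cong_fsum lpa_cong_edge_ghost_mult)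
  then show ?thesis
    using assms by (simp add: fmul_sum_left fmul_sum_right fmul_mon_mon fsum_diagonal)
qed

lemma vertex_mult_edge_ghost_sum:
  assumes "I \<subseteq> {e. s e = v}"
  shows "lpa_cong s r (fmul (mon [V v]) (fsum (\<lambda>e. mon [Ed e, Gh e]) I))
           (fsum (\<lambda>e. mon [Ed e, Gh e] :: _ \<Rightarrow> 'k::field) I)"
  unfolding fmul_sum_right fmul_mon_mon
proof (rule lpa_cong_fsum)
  fix e assume "e \<in> I"
  then show "lpa_cong s r (mon ([V v] @ [Ed e, Gh e]) :: _ \<Rightarrow> 'k) (mon [Ed e, Gh e])"
    using assms wcong_context[OF wcong_sE[of s r e "TYPE('k)"], where a="[]" and b="[Gh e]"]
    by (auto simp: wcong_def)
qed

lemma edge_ghost_sum_mult_vertex: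
  assumes "I \<subseteq> {e. s e = v}"
  shows "lpa_cong s r (fmul (fsum (\<lambda>e. mon [Ed e, Gh e]) I) (mon [V v]))
           (fsum (\<lambda>e. mon [Ed e, Gh e] :: _ \<Rightarrow> 'k::field) I)"
  unfolding fmul_sum_left fmul_mon_mon
proof (rule lpa_cong_fsum)
  fix e assume "e \<in> I"
  then show "lpa_cong s r (mon ([Ed e, Gh e] @ [V v]) :: _ \<Rightarrow> 'k) (mon [Ed e, Gh e])"
    using assms wcong_context[OF wcong_Gs[of s r e "TYPE('k)"], where a="[Ed e]" and b="[]"]
    by (auto simp: wcong_def)
qed

lemma vertex_minus_edge_ghosts_idem:
  assumes "finite I" "I \<subseteq> {e. s e = v}"
  defines "y \<equiv> fsub (mon [V v]) (fsum (\<lambda>e. mon [Ed e, Gh e]) I) :: _ \<Rightarrow> 'k::field"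
  shows "lpa_cong s r (fmul y y) y"
  unfolding y_def using assms(1,2) wcong_VV[of s r v "TYPE('k)"]
  by (intro lpa_cong_idempotent_diff vertex_mult_edge_ghost_sum edge_ghost_sum_mult_vertex
      edge_ghost_sum_idem) (simp_all add: fmul_mon_mon wcong_def)

context lpa_canonical_trace begin

lemma t_edge_ghost: "t (mon [Ed e, Gh e]) = vtrace (r e)"
  using can[unfolded canonical_trace_def, rule_format, of "PE [e]" "PE [e]"]
  by (simp add: fmul_mon_mon wstar_def vtrace_def)

lemma t_vertex_minus_edge_ghosts:
  "finite I \<Longrightarrow> t (fsub (mon [V v]) (fsum (\<lambda>e. mon [Ed e, Gh e]) I))
     = t (fsub (mon [V v]) (fsum (\<lambda>e. mon [V (r e)]) I))"
  by (simp add: t_sub Fset_mon Fset_fsum t_sum t_edge_ghost t_vertex_minus_ranges vtrace_def)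

lemma faithful_imp_vertex_positive:
  assumes "faithful s r ks rs t"
  shows "positive rs (t (mon [V v]))"
proof -
  have "lpa_cong s r (mon [V v]) (fmul (mon [V v]) (fstar ks (mon [V v])) :: _ \<Rightarrow> 'k)"
    using wcong_sym[OF wcong_VV] by (simp add: fmul_mon_mon wstar_def wcong_def)
  then have "lpa_positive s r ks (mon [V v] :: _ \<Rightarrow> 'k)"
    by (intro lpa_positive_if_cong_hermitian_square Fset_mon vertex_notin_lpa_ideal) simp_all
  then show ?thesis using assms by (simp add: faithful_def Fset_mon)
qed

lemma faithful_imp_vertex_minus_ranges_nonneg:
  assumes "faithful s r ks rs t" "finite I" "I \<subseteq> {e. s e = v}"
  shows "nonneg rs (t (fsub (mon [V v]) (fsum (\<lambda>e. mon [V (r e)]) I)))"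
proof -
  define y where "y = (fsub (mon [V v]) (fsum (\<lambda>e. mon [Ed e, Gh e]) I) :: _ \<Rightarrow> 'k)"
  have yF: "y \<in> Fset" using assms(2) by (simp add: y_def Fset_sub Fset_mon Fset_fsum)
  have "nonneg rs (t y)"
  proof (cases "y \<in> lpa_ideal s r")
    case True then show ?thesis by (simp add: t_ideal)
  next
    case False
    have "fstar ks y = y" by (simp add: y_def fstar_sub fstar_sum wstar_def)
    then have "lpa_cong s r y (fmul y (fstar ks y))"
      using lpa_cong_sym[OF vertex_minus_edge_ghosts_idem[OF assms(2,3)]] by (simp add: y_def)
    then have "lpa_positive s r ks y" using False yF by (intro lpa_positive_if_cong_hermitian_square)
    then show ?thesis using assms(1) yF by (simp add: faithful_def positive_def)
  qed
  then show ?thesis using assms(2) by (simp add: y_def t_vertex_minus_edge_ghosts)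
qed

end

theorem theorem3p5:
  fixes s r :: "'e \<Rightarrow> 'v"
    and ks :: "'k::field \<Rightarrow> 'k"
    and sc :: "'k \<Rightarrow> 'r::ring \<Rightarrow> 'r"
    and rs :: "'r \<Rightarrow> 'r"
    and t :: "(('v, 'e) gen list \<Rightarrow> 'k) \<Rightarrow> 'r"
  assumes "field_involution ks"
    and "involutive_algebra ks sc rs"
    and "positive_definite rs"
    and "lpa_trace s r t"
    and "K_linear_trace sc t"
    and "canonical_trace s r ks t"
  shows "faithful s r ks rs t \<longleftrightarrow>
           (\<forall>v I. finite I \<longrightarrow> I \<subseteq> {e. s e = v} \<longrightarrow>
              nonneg rs (t (fsub (mon [V v]) (fsum (\<lambda>e. mon [V (r e)]) I))))
         \<and> (\<forall>v. positive rs (t (mon [V v])))"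
proof -
  interpret lpa_canonical_trace ks sc rs s r t
    using assms by unfold_locales
  show ?thesis
    using faithful_imp_vertex_minus_ranges_nonneg faithful_imp_vertex_positive faithful_if_conditions
    by blast
qed

end
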